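(* Let $\mathsf{Syn}(\delta)$ be the free PROP on a single generator $\delta:1\to 2$ (graph model described in the context), let $\Pi:\mathsf{Syn}(\delta)\to\mathbf{FinCorel}$ be the ancestry functor, let $\mathsf{AncQ}:=\mathsf{Syn}(\delta)/\equiv_\Pi$ with quotient map $q$, and let $\bar\Pi:\mathsf{AncQ}\to\mathbf{FinCorel}$ be the induced functor with $\Pi=\bar\Pi\circ q$. Then $\bar\Pi$ is fully faithful with image the sub-PROP $\mathbf{FinCorel}^\circ$. Moreover, there is a canonical isomorphism of PROPs $\Phi:\mathbf{Cocom}\to\mathsf{AncQ}$ which is the identity on objects and sends the generator $\delta$ of $\mathbf{Cocom}$ to the class $[\delta]\in\mathsf{AncQ}(1,2)$. In particular $\mathsf{AncQ}\simeq\mathbf{Cocom}\simeq\mathbf{FinCorel}^\circ$.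
   Context: A PROP is a strict symmetric monoidal category whose monoid of objects is $(\mathbb{N},+,0)$; a morphism of PROPs is an identity-on-objects strict symmetric monoidal functor. Write $\underline{m}=\{1,\dots,m\}$. $\mathsf{Syn}(\delta)$: objects are natural numbers; a morphism $f:m\to n$ is an isomorphism class of finite directed acyclic graphs $G(f)$ with $m$ linearly ordered input half-edges, $n$ linearly ordered output half-edges, and a finite set of internal vertices, each having exactly one incoming half-edge and a linearly ordered (left/right) pair of outgoing half-edges; isomorphisms are bijections of internal vertices inducing graph isomorphisms preserving the orders on inputs/outputs and the incidence at each vertex. Composition glues output half-edges to input half-edges in order; tensor ($+$) is disjoint union with concatenated boundary orders; symmetries are wire crossings (not vertices). $\delta:1\to 2$ is the graph with one internal vertex. This is the free PROP on one morphism $1\to 2$. $\mathbf{FinCorel}$: PROP with objects $\mathbb{N}$, morphisms $m\to n$ the equivalence relations on $\underline{m}\sqcup\underline{n}$; the composite of $R:m\to n$ and $S:n\to p$ is the restriction to $\underline{m}\sqcup\underline{p}$ of the equivalence relation generated (transitive closure) by $R\cup S$ on $\underline{m}\sqcup\underline{n}\sqcup\underline{p}$; tensor is disjoint union with reindexing; symmetries are transposition corelations. Ancestry functor: for $f:m\to n$, let $|G(f)|$ be the underlying undirected graph of $G(f)$ with input half-edges attached as pendant vertices labelled by $\underline{m}$ and output half-edges as pendant vertices labelled by $\underline{n}$; $\Pi(f)$ is the equivalence relation on $\underline{m}\sqcup\underline{n}$ with $x\sim y$ iff the pendants $x,y$ lie in the same connected component of $|G(f)|$. $\Pi$ is an identity-on-objects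 strict symmetric monoidal functor. $f\equiv_\Pi g$ iff $\Pi(f)=\Pi(g)$; this is a PROP congruence and $\mathsf{AncQ}$ is the quotient PROP. $\mathbf{FinCorel}^\circ\subseteq\mathbf{FinCorel}$: the corelations $R:m\to n$ such that (a) every equivalence class of $R$ contains exactly one element of $\underline{m}$ and (b) every equivalence class contains at least one element of $\underline{n}$. $\mathbf{Cocom}$: the PROP freely generated by a morphism $\delta:1\to 2$ subject to $(\delta+\mathrm{id}_1)\circ\delta=(\mathrm{id}_1+\delta)\circ\delta$ and $\sigma_{1,1}\circ\delta=\delta$ ($\sigma_{1,1}:2\to 2$ the swap), with no counit, unit or multiplication. *)

theory Defs
  imports Main
begin

text \<open>Sources: input half-edge i, or out-port b of internal
vertex k (b = False: left, b = True: right). Targets: in-port of internal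
vertex k, or output half-edge j. A morphism m -> n is represented by a pair
(v, w): v internal vertices numbered 0..<v and a wiring w sending each target
to the source it is glued to. Morphisms of Syn(delta) are isomorphism classes
of such representatives (see syn_iso).\<close>

datatype src = SIn nat | SV nat bool
datatype tgt = TV nat | TOut nat

type_synonym sgraph = "nat \<times> (tgt \<Rightarrow> src)"

definition sources :: "nat \<Rightarrow> nat \<Rightarrow> src set" where
  "sources m v = {SIn i | i. i < m} \<union> {SV k b | k b. k < v}"

definition targets :: "nat \<Rightarrow> nat \<Rightarrow> tgt set" where
  "targets n v = {TV k | k. k < v} \<union> {TOut j | j. j < n}"

definition feeds :: "sgraph \<Rightarrow> (nat \<times> nat) set" where
  "feeds G = {(k, k'). k' < fst G \<and> (\<exists>b. snd G (TV k') = SV k b)}"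

definition wf_syn :: "nat \<Rightarrow> nat \<Rightarrow> sgraph \<Rightarrow> bool" where
  "wf_syn m n G \<longleftrightarrow>
     bij_betw (snd G) (targets n (fst G)) (sources m (fst G)) \<and> acyclic (feeds G)"

fun ren_src :: "(nat \<Rightarrow> nat) \<Rightarrow> src \<Rightarrow> src" where
  "ren_src p (SIn i) = SIn i"
| "ren_src p (SV k b) = SV (p k) b"

fun ren_tgt :: "(nat \<Rightarrow> nat) \<Rightarrow> tgt \<Rightarrow> tgt" where
  "ren_tgt p (TV k) = TV (p k)"
| "ren_tgt p (TOut j) = TOut j"

definition syn_iso :: "nat \<Rightarrow> sgraph \<Rightarrow> sgraph \<Rightarrow> bool" where
  "syn_iso n G H \<longleftrightarrow> fst G = fst H \<and>
     (\<exists>p. bij_betw p {..<fst G} {..<fst H} \<and>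
          (\<forall>t\<in>targets n (fst G). ren_src p (snd G t) = snd H (ren_tgt p t)))"

text \<open>Composition: syn_comp H G is "H after G" (G : m -> n, H : n -> p);
G's vertices come first, H's vertices are shifted by the number of G's.\<close>
definition syn_comp :: "sgraph \<Rightarrow> sgraph \<Rightarrow> sgraph" where
  "syn_comp H G =
    (let v = fst G;
         res = (\<lambda>s. case s of SIn j \<Rightarrow> snd G (TOut j) | SV k b \<Rightarrow> SV (v + k) b)
     in (v + fst H,
         \<lambda>t. case t of
               TV k \<Rightarrow> (if k < v then snd G (TV k) else res (snd H (TV (k - v))))
             | TOut j \<Rightarrow> res (snd H (TOut j))))"

text \<open>Tensor: syn_tensor m n G H = G + H where G : m -> n.\<close>
definition syn_tensor :: "nat \<Rightarrow> nat \<Rightarrow> sgraph \<Rightarrow> sgraph \<Rightarrow> sgraph" where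
  "syn_tensor m n G H =
    (let v = fst G;
         sh = (\<lambda>s. case s of SIn i \<Rightarrow> SIn (m + i) | SV k b \<Rightarrow> SV (v + k) b)
     in (v + fst H,
         \<lambda>t. case t of
               TV k \<Rightarrow> (if k < v then snd G (TV k) else sh (snd H (TV (k - v))))
             | TOut j \<Rightarrow> (if j < n then snd G (TOut j) else sh (snd H (TOut (j - n))))))"

definition syn_id :: "nat \<Rightarrow> sgraph" where
  "syn_id n = (0, \<lambda>t. case t of TOut j \<Rightarrow> SIn j | TV k \<Rightarrow> SIn 0)"

definition syn_swap :: sgraph where
  "syn_swap = (0, \<lambda>t. case t of TOut j \<Rightarrow> (if j = 0 then SIn 1 else SIn 0) | TV k \<Rightarrow> SIn 0)"

definition syn_delta :: sgraph where
  "syn_delta = (1, \<lambda>t. case t of TV k \<Rightarrow> SIn 0 | TOut j \<Rightarrow> SV 0 (j \<noteq> 0))"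

text \<open>Boundary of m -> n: Inl i (input i) and Inr j (output j).\<close>
definition bnd :: "nat \<Rightarrow> nat \<Rightarrow> (nat + nat) set" where
  "bnd m n = Inl ` {..<m} \<union> Inr ` {..<n}"

definition fincorel :: "nat \<Rightarrow> nat \<Rightarrow> (nat + nat) rel set" where
  "fincorel m n = {R. equiv (bnd m n) R}"

definition fincorel_circ :: "nat \<Rightarrow> nat \<Rightarrow> (nat + nat) rel set" where
  "fincorel_circ m n = {R \<in> fincorel m n.
      (\<forall>x\<in>bnd m n. \<exists>!i. i < m \<and> (x, Inl i) \<in> R) \<and>
      (\<forall>x\<in>bnd m n. \<exists>j<n. (x, Inr j) \<in> R)}"

datatype node = NIn nat | NVx nat | NOut nat

fun src_node :: "src \<Rightarrow> node" where
  "src_node (SIn i) = NIn i"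
| "src_node (SV k b) = NVx k"

fun tgt_node :: "tgt \<Rightarrow> node" where
  "tgt_node (TV k) = NVx k"
| "tgt_node (TOut j) = NOut j"

fun bnd_node :: "nat + nat \<Rightarrow> node" where
  "bnd_node (Inl i) = NIn i"
| "bnd_node (Inr j) = NOut j"

text \<open>Edges of the underlying undirected graph |G| (inputs and outputs as pendant vertices).\<close>
definition und_edges :: "nat \<Rightarrow> sgraph \<Rightarrow> (node \<times> node) set" where
  "und_edges n G = {(tgt_node t, src_node (snd G t)) | t. t \<in> targets n (fst G)}"

definition ancestry :: "nat \<Rightarrow> nat \<Rightarrow> sgraph \<Rightarrow> (nat + nat) rel" where
  "ancestry m n G = {(x, y). x \<in> bnd m n \<and> y \<in> bnd m n \<and>
      (bnd_node x, bnd_node y) \<in> (und_edges n G \<union> (und_edges n G)\<inverse>)\<^sup>*}"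

text \<open>The smallest PROP congruence on Syn(delta) (on representatives, so it
contains isomorphism) containing coassociativity and cocommutativity.\<close>
inductive cocom_cong :: "nat \<Rightarrow> nat \<Rightarrow> sgraph \<Rightarrow> sgraph \<Rightarrow> bool" where
  iso: "wf_syn m n G \<Longrightarrow> wf_syn m n H \<Longrightarrow> syn_iso n G H \<Longrightarrow> cocom_cong m n G H"
| coassoc: "cocom_cong 1 3
     (syn_comp (syn_tensor 1 2 syn_delta (syn_id 1)) syn_delta)
     (syn_comp (syn_tensor 1 1 (syn_id 1) syn_delta) syn_delta)"
| cocomm: "cocom_cong 1 2 (syn_comp syn_swap syn_delta) syn_delta"
| sym: "cocom_cong m n G H \<Longrightarrow> cocom_cong m n H G"
| trans: "cocom_cong m n G H \<Longrightarrow> cocom_cong m n H K \<Longrightarrow> cocom_cong m n G K"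
| comp_post: "cocom_cong m n G H \<Longrightarrow> wf_syn n p K \<Longrightarrow>
     cocom_cong m p (syn_comp K G) (syn_comp K H)"
| comp_pre: "cocom_cong n p G H \<Longrightarrow> wf_syn m n K \<Longrightarrow>
     cocom_cong m p (syn_comp G K) (syn_comp H K)"
| tens_l: "cocom_cong m n G H \<Longrightarrow> wf_syn m' n' K \<Longrightarrow>
     cocom_cong (m + m') (n + n') (syn_tensor m n G K) (syn_tensor m n H K)"
| tens_r: "cocom_cong m' n' G H \<Longrightarrow> wf_syn m n K \<Longrightarrow>
     cocom_cong (m + m') (n + n') (syn_tensor m n K G) (syn_tensor m n K H)"

end

theory Submission
  imports Defs "HOL-Combinatorics.Transposition"
begin

text \<open>Every internal vertex has exactly one incoming half-edge, so a well-formed graph is a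
  forest rooted at the inputs: every boundary point descends from a unique input, and two
  boundary points are connected in the underlying graph iff they have the same root. The
  ancestry corelation is thus determined by the root map of the outputs, which is onto since
  every input either is an output or feeds a vertex; conversely every surjection is realised.
  Composition, tensor and isomorphism act compatibly on root maps, and coassociativity and
  cocommutativity preserve them, so congruent graphs have the same ancestry.

  For the converse, induct on the number of vertices. A vertex fed directly by an input a can
  be peeled off: the graph is isomorphic to G' composed with the split of a. If two graphs with
  the same root map peel off splits of different inputs, these splits commute. If they peel off
  splits of the same input, the graphs differ only in how the outputs descending from a are cut
  in two; cocommutativity (exchanging the two parts) and coassociativity (passing to a nested
  cut) connect any two such cuts.\<close>

lemma in_sources [simp]:
  "SIn i \<in> sources m v \<longleftrightarrow> i < m" "SV k b \<in> sources m v \<longleftrightarrow> k < v"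
  by (auto simp: sources_def)

lemma in_targets [simp]:
  "TV k \<in> targets n v \<longleftrightarrow> k < v" "TOut j \<in> targets n v \<longleftrightarrow> j < n"
  by (auto simp: targets_def)

lemma sources_mono: "s \<in> sources m v \<Longrightarrow> m \<le> m' \<Longrightarrow> v \<le> v' \<Longrightarrow> s \<in> sources m' v'"
  by (cases s) auto

lemma targets_mono: "t \<in> targets n v \<Longrightarrow> n \<le> n' \<Longrightarrow> v \<le> v' \<Longrightarrow> t \<in> targets n' v'"
  by (cases t) auto

lemma targets_eq: "targets n v = TV ` {..<v} \<union> TOut ` {..<n}"
  by (auto simp: targets_def)

lemma sources_eq: "sources m v = SIn ` {..<m} \<union> (\<lambda>(k, b). SV k b) ` ({..<v} \<times> UNIV)"
  by (auto simp: sources_def)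

lemma finite_targets [simp]: "finite (targets n v)"
  by (simp add: targets_eq)

lemma finite_sources [simp]: "finite (sources m v)"
  by (simp add: sources_eq)

lemma card_targets: "card (targets n v) = v + n"
  unfolding targets_eq by (subst card_Un_disjoint) (auto simp: card_image inj_on_def)

lemma card_sources: "card (sources m v) = m + 2 * v"
proof -
  have "card ((\<lambda>(k, b). SV k b) ` ({..<v} \<times> (UNIV :: bool set))) = 2 * v"
    by (subst card_image) (auto simp: inj_on_def card_cartesian_product)
  then show ?thesis
    unfolding sources_eq by (subst card_Un_disjoint) (auto simp: card_image inj_on_def)
qed

lemma wf_syn_into: "wf_syn m n G \<Longrightarrow> t \<in> targets n (fst G) \<Longrightarrow> snd G t \<in> sources m (fst G)"
  unfolding wf_syn_def bij_betw_def by auto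

lemma wf_syn_inj:
  "wf_syn m n G \<Longrightarrow> t \<in> targets n (fst G) \<Longrightarrow> t' \<in> targets n (fst G) \<Longrightarrow>
     snd G t = snd G t' \<Longrightarrow> t = t'"
  unfolding wf_syn_def bij_betw_def inj_on_def by auto

lemma wf_syn_onto: "wf_syn m n G \<Longrightarrow> s \<in> sources m (fst G) \<Longrightarrow> \<exists>t\<in>targets n (fst G). snd G t = s"
  unfolding wf_syn_def bij_betw_def by (metis imageE)

lemma wf_syn_outputs: "wf_syn m n G \<Longrightarrow> n = m + fst G"
  using bij_betw_same_card[of "snd G" "targets n (fst G)" "sources m (fst G)"]
  by (simp add: wf_syn_def card_targets card_sources)

lemma feeds_subset: "wf_syn m n G \<Longrightarrow> feeds G \<subseteq> {..<fst G} \<times> {..<fst G}"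
  by (auto simp: feeds_def dest!: wf_syn_into[where t = "TV _"])

lemma wf_feeds:
  assumes "wf_syn m n G" shows "wf (feeds G)"
proof (rule finite_acyclic_wf)
  show "finite (feeds G)" using finite_subset[OF feeds_subset[OF assms]] by blast
  show "acyclic (feeds G)" using assms by (simp add: wf_syn_def)
qed

lemma wf_synI:
  assumes into: "\<And>t. t \<in> targets n (fst G) \<Longrightarrow> snd G t \<in> sources m (fst G)"
    and onto: "\<And>s. s \<in> sources m (fst G) \<Longrightarrow> \<exists>t\<in>targets n (fst G). snd G t = s"
    and card: "n = m + fst G" and acyc: "wf (feeds G)"
  shows "wf_syn m n G"
proof -
  have img: "snd G ` targets n (fst G) = sources m (fst G)"
    using into onto by fastforce
  then have "inj_on (snd G) (targets n (fst G))"
    by (intro eq_card_imp_inj_on) (simp_all add: card card_targets card_sources)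
  with img acyc show ?thesis
    by (simp add: wf_syn_def bij_betw_def wf_acyclic)
qed

section \<open>Roots\<close>

inductive has_root :: "sgraph \<Rightarrow> src \<Rightarrow> nat \<Rightarrow> bool" for G where
  input: "has_root G (SIn i) i"
| vertex: "k < fst G \<Longrightarrow> has_root G (snd G (TV k)) i \<Longrightarrow> has_root G (SV k b) i"

lemma has_root_SIn [simp]: "has_root G (SIn j) i \<longleftrightarrow> i = j"
  by (auto elim: has_root.cases intro: has_root.intros)

lemma has_root_SV [simp]: "has_root G (SV k b) i \<longleftrightarrow> k < fst G \<and> has_root G (snd G (TV k)) i"
  by (auto elim: has_root.cases intro: has_root.intros)

lemma has_root_unique: "has_root G s i \<Longrightarrow> has_root G s i' \<Longrightarrow> i = i'"
  by (induction s i rule: has_root.induct) auto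

lemma has_root_exists:
  assumes G: "wf_syn m n G" and s: "s \<in> sources m (fst G)"
  shows "\<exists>i<m. has_root G s i"
proof (cases s)
  case (SIn i)
  then show ?thesis using s by simp
next
  case (SV k b)
  have "k < fst G \<Longrightarrow> \<exists>i<m. has_root G (SV k b) i" for b
  proof (induction k arbitrary: b rule: wf_induct_rule[OF wf_feeds[OF G]])
    case (1 k)
    have into: "snd G (TV k) \<in> sources m (fst G)"
      using wf_syn_into[OF G] 1(2) by simp
    show ?case
    proof (cases "snd G (TV k)")
      case (SIn i)
      then show ?thesis using into 1(2) by auto
    next
      case (SV k' b')
      then have "(k', k) \<in> feeds G" "k' < fst G"
        using 1(2) into by (auto simp: feeds_def)
      then show ?thesis using 1 SV by auto
    qed
  qed
  then show ?thesis using s SV by simp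
qed

definition out_root :: "sgraph \<Rightarrow> nat \<Rightarrow> nat" where
  "out_root G j = (THE i. has_root G (snd G (TOut j)) i)"

lemma out_root_eqI: "has_root G (snd G (TOut j)) i \<Longrightarrow> out_root G j = i"
  unfolding out_root_def using has_root_unique by blast

lemma has_root_out_root:
  assumes "wf_syn m n G" "j < n"
  shows "has_root G (snd G (TOut j)) (out_root G j)" and "out_root G j < m"
proof -
  obtain i where "i < m" "has_root G (snd G (TOut j)) i"
    using has_root_exists[OF assms(1) wf_syn_into[OF assms(1), of "TOut j"]] assms(2) by auto
  then show "has_root G (snd G (TOut j)) (out_root G j)" "out_root G j < m"
    using out_root_eqI by auto
qed

lemmas out_root_less = has_root_out_root(2)

fun bnd_root :: "sgraph \<Rightarrow> nat + nat \<Rightarrow> nat" where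
  "bnd_root G (Inl i) = i"
| "bnd_root G (Inr j) = out_root G j"

text \<open>A vertex has the root of its out-ports; the left one is used.\<close>
fun node_root :: "sgraph \<Rightarrow> node \<Rightarrow> nat \<Rightarrow> bool" where
  "node_root G (NIn i') i \<longleftrightarrow> i = i'"
| "node_root G (NVx k) i \<longleftrightarrow> has_root G (SV k False) i"
| "node_root G (NOut j) i \<longleftrightarrow> has_root G (snd G (TOut j)) i"

lemma node_root_src_node: "node_root G (src_node s) i \<longleftrightarrow> has_root G s i"
  by (cases s) auto

lemma node_root_und_edge:
  assumes "(x, y) \<in> und_edges n G"
  shows "node_root G x i \<longleftrightarrow> node_root G y i"
proof -
  obtain t where t: "t \<in> targets n (fst G)" "x = tgt_node t" "y = src_node (snd G t)"
    using assms by (auto simp: und_edges_def)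
  then have "node_root G x i \<longleftrightarrow> has_root G (snd G t) i"
    by (cases t) auto
  then show ?thesis using t(3) by (simp add: node_root_src_node)
qed

lemma node_root_path:
  assumes "(x, y) \<in> (und_edges n G \<union> (und_edges n G)\<inverse>)\<^sup>*"
  shows "node_root G x i \<longleftrightarrow> node_root G y i"
  using assms by induction (auto dest: node_root_und_edge)

lemma has_root_path:
  "has_root G s i \<Longrightarrow> (src_node s, NIn i) \<in> (und_edges n G \<union> (und_edges n G)\<inverse>)\<^sup>*"
proof (induction s i rule: has_root.induct)
  case (vertex k i b)
  then have "(NVx k, src_node (snd G (TV k))) \<in> und_edges n G"
    by (force simp: und_edges_def)
  then show ?case
    using vertex(3) by (simp, meson UnI1 converse_rtrancl_into_rtrancl)
qed simp

lemma path_bnd_root: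
  assumes G: "wf_syn m n G" and x: "x \<in> bnd m n"
  shows "(bnd_node x, NIn (bnd_root G x)) \<in> (und_edges n G \<union> (und_edges n G)\<inverse>)\<^sup>*"
proof (cases x)
  case (Inr j)
  then have j: "j < n" using x by (auto simp: bnd_def)
  then have "(NOut j, src_node (snd G (TOut j))) \<in> und_edges n G"
    by (force simp: und_edges_def)
  then show ?thesis
    using Inr has_root_path[OF has_root_out_root(1)[OF G j], of n]
    by (simp, meson UnI1 converse_rtrancl_into_rtrancl)
qed simp

lemma ancestry_same_root:
  assumes G: "wf_syn m n G"
  shows "ancestry m n G = {(x, y). x \<in> bnd m n \<and> y \<in> bnd m n \<and> bnd_root G x = bnd_root G y}"
proof -
  let ?E = "und_edges n G \<union> (und_edges n G)\<inverse>"
  have root: "node_root G (bnd_node x) (bnd_root G x)" if "x \<in> bnd m n" for x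
    using that has_root_out_root(1)[OF G] by (auto simp: bnd_def)
  have "(bnd_node x, bnd_node y) \<in> ?E\<^sup>* \<longleftrightarrow> bnd_root G x = bnd_root G y"
    if x: "x \<in> bnd m n" and y: "y \<in> bnd m n" for x y
  proof
    assume "(bnd_node x, bnd_node y) \<in> ?E\<^sup>*"
    then have "node_root G (bnd_node y) (bnd_root G x)"
      using node_root_path root[OF x] by blast
    then show "bnd_root G x = bnd_root G y"
      using root[OF y] y by (auto simp: bnd_def dest: has_root_unique)
  next
    assume eq: "bnd_root G x = bnd_root G y"
    have "(NIn (bnd_root G y), bnd_node y) \<in> ?E\<^sup>*"
      using path_bnd_root[OF G y] sym_rtrancl[OF sym_Un_converse] by (meson symD)
    then show "(bnd_node x, bnd_node y) \<in> ?E\<^sup>*"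
      using path_bnd_root[OF G x] eq by (metis rtrancl_trans)
  qed
  then show ?thesis by (auto simp: ancestry_def)
qed

lemma ancestry_eq_iff_out_root_eq:
  assumes G: "wf_syn m n G" and H: "wf_syn m n H"
  shows "ancestry m n G = ancestry m n H \<longleftrightarrow> (\<forall>j<n. out_root G j = out_root H j)"
proof
  assume eq: "ancestry m n G = ancestry m n H"
  show "\<forall>j<n. out_root G j = out_root H j"
  proof (intro allI impI)
    fix j assume j: "j < n"
    have "(Inr j, Inl (out_root G j)) \<in> ancestry m n G"
      using out_root_less[OF G j] j by (auto simp: ancestry_same_root[OF G] bnd_def)
    then show "out_root G j = out_root H j"
      by (simp add: eq ancestry_same_root[OF H])
  qed
next
  assume "\<forall>j<n. out_root G j = out_root H j"
  then have "\<forall>x\<in>bnd m n. bnd_root G x = bnd_root H x" by (auto simp: bnd_def)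
  then show "ancestry m n G = ancestry m n H"
    by (auto simp: ancestry_same_root[OF G] ancestry_same_root[OF H])
qed

section \<open>Composition and tensor\<close>

definition comp_src :: "sgraph \<Rightarrow> src \<Rightarrow> src" where
  "comp_src G s = (case s of SIn j \<Rightarrow> snd G (TOut j) | SV k b \<Rightarrow> SV (fst G + k) b)"

lemma comp_src_simps [simp]:
  "comp_src G (SIn j) = snd G (TOut j)" "comp_src G (SV k b) = SV (fst G + k) b"
  by (simp_all add: comp_src_def)

fun comp_tgt :: "nat \<Rightarrow> tgt \<Rightarrow> tgt" where
  "comp_tgt v (TV k) = TV (v + k)"
| "comp_tgt v (TOut j) = TOut j"

lemma fst_syn_comp [simp]: "fst (syn_comp H G) = fst G + fst H"
  by (simp add: syn_comp_def Let_def)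

lemma snd_syn_comp_TV:
  "snd (syn_comp H G) (TV k) =
     (if k < fst G then snd G (TV k) else comp_src G (snd H (TV (k - fst G))))"
  by (simp add: syn_comp_def Let_def comp_src_def)

lemma snd_syn_comp_TOut [simp]: "snd (syn_comp H G) (TOut j) = comp_src G (snd H (TOut j))"
  by (simp add: syn_comp_def Let_def comp_src_def)

lemma snd_syn_comp_comp_tgt: "snd (syn_comp H G) (comp_tgt (fst G) t) = comp_src G (snd H t)"
  by (cases t) (simp_all add: snd_syn_comp_TV)

lemma syn_comp_assoc: "syn_comp K (syn_comp L M) = syn_comp (syn_comp K L) M"
  by (auto simp: syn_comp_def Let_def fun_eq_iff split: tgt.split src.split)

definition shift_src :: "nat \<Rightarrow> nat \<Rightarrow> src \<Rightarrow> src" where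
  "shift_src m v s = (case s of SIn i \<Rightarrow> SIn (m + i) | SV k b \<Rightarrow> SV (v + k) b)"

lemma shift_src_simps [simp]:
  "shift_src m v (SIn i) = SIn (m + i)" "shift_src m v (SV k b) = SV (v + k) b"
  by (simp_all add: shift_src_def)

fun shift_tgt :: "nat \<Rightarrow> nat \<Rightarrow> tgt \<Rightarrow> tgt" where
  "shift_tgt n v (TV k) = TV (v + k)"
| "shift_tgt n v (TOut j) = TOut (n + j)"

lemma fst_syn_tensor [simp]: "fst (syn_tensor m n G K) = fst G + fst K"
  by (simp add: syn_tensor_def Let_def)

lemma snd_syn_tensor_TV:
  "snd (syn_tensor m n G K) (TV k) =
     (if k < fst G then snd G (TV k) else shift_src m (fst G) (snd K (TV (k - fst G))))"
  by (simp add: syn_tensor_def Let_def shift_src_def)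

lemma snd_syn_tensor_TOut:
  "snd (syn_tensor m n G K) (TOut j) =
     (if j < n then snd G (TOut j) else shift_src m (fst G) (snd K (TOut (j - n))))"
  by (simp add: syn_tensor_def Let_def shift_src_def)

lemma snd_syn_tensor_left:
  "t \<in> targets n (fst G) \<Longrightarrow> snd (syn_tensor m n G K) t = snd G t"
  by (cases t) (simp_all add: snd_syn_tensor_TV snd_syn_tensor_TOut)

lemma snd_syn_tensor_shift_tgt:
  "snd (syn_tensor m n G K) (shift_tgt n (fst G) t) = shift_src m (fst G) (snd K t)"
  by (cases t) (simp_all add: snd_syn_tensor_TV snd_syn_tensor_TOut)

text \<open>The shape of the edge relation of a composite or a tensor, whose second block of
  vertices is shifted by v.\<close>
definition stack_rel :: "nat \<Rightarrow> (nat \<times> nat) set \<Rightarrow> (nat \<times> nat) set \<Rightarrow> (nat \<times> nat) set" where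
  "stack_rel v r s = r \<union> {(k, k'). k < v \<and> v \<le> k'} \<union>
     {(k, k'). v \<le> k \<and> v \<le> k' \<and> (k - v, k' - v) \<in> s}"

lemma wf_stack_rel:
  assumes r: "wf r" "r \<subseteq> {..<v} \<times> {..<v}" and s: "wf s"
  shows "wf (stack_rel v r s)"
  unfolding stack_rel_def
proof (rule wf_Un[OF wf_Un])
  show "wf {(k, k'). k < v \<and> v \<le> k'}"
    by (rule wf_subset[OF wf_measure[of "\<lambda>k. if k < v then 0 else 1"]]) auto
  show "wf {(k, k'). v \<le> k \<and> v \<le> k' \<and> (k - v, k' - v) \<in> s}"
    by (rule wf_subset[OF wf_inv_image[OF s, of "\<lambda>k. k - v"]]) auto
  show "Domain r \<inter> Range {(k, k'). k < v \<and> v \<le> k'} = {}"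
    using r(2) by auto
  show "Domain (r \<union> {(k, k'). k < v \<and> v \<le> k'}) \<inter>
      Range {(k, k'). v \<le> k \<and> v \<le> k' \<and> (k - v, k' - v) \<in> s} = {}"
    using r(2) by (auto simp: not_less)
qed (rule r(1))

lemma comp_tgt_in_targets: "u \<in> targets p w \<Longrightarrow> comp_tgt v u \<in> targets p (v + w)"
  by (cases u) auto

lemma targets_add_cases:
  assumes "t \<in> targets p (v + w)"
  obtains k where "k < v" "t = TV k" | u where "u \<in> targets p w" "t = comp_tgt v u"
proof (cases t)
  case (TV k)
  then show thesis using that(1)[of k] that(2)[of "TV (k - v)"] assms by (cases "k < v") auto
next
  case (TOut j)
  then show thesis using that(2)[of "TOut j"] assms by simp
qed

lemma comp_src_into:
  assumes G: "wf_syn m n G" and s: "s \<in> sources n v"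
  shows "comp_src G s \<in> sources m (fst G + v)"
proof (cases s)
  case (SIn j)
  then show ?thesis using s wf_syn_into[OF G, of "TOut j"] sources_mono[of _ m "fst G" m] by simp
qed (use s in simp)

lemma syn_comp_onto:
  assumes G: "wf_syn m n G" and H: "wf_syn n p H" and s: "s \<in> sources m (fst G + fst H)"
  shows "\<exists>t\<in>targets p (fst G + fst H). snd (syn_comp H G) t = s"
proof -
  have from_H: "\<exists>t\<in>targets p (fst G + fst H). snd (syn_comp H G) t = comp_src G s'"
    if s': "s' \<in> sources n (fst H)" for s'
  proof -
    obtain u where u: "u \<in> targets p (fst H)" "snd H u = s'" using wf_syn_onto[OF H s'] by blast
    then show ?thesis using comp_tgt_in_targets[OF u(1)] by (metis snd_syn_comp_comp_tgt)
  qed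
  show ?thesis
  proof (cases "s \<in> sources m (fst G)")
    case True
    then obtain t where t: "t \<in> targets n (fst G)" "snd G t = s" using wf_syn_onto[OF G] by blast
    show ?thesis
    proof (cases t)
      case (TV k)
      then show ?thesis using t by (intro bexI[of _ t]) (auto simp: snd_syn_comp_TV)
    next
      case (TOut j)
      then show ?thesis using from_H[of "SIn j"] t by simp
    qed
  next
    case False
    then obtain k b where "s = SV (fst G + k) b" "k < fst H"
      using s by (cases s) (auto dest!: le_Suc_ex[OF leI])
    then show ?thesis using from_H[of "SV k b"] by simp
  qed
qed

lemma feeds_syn_comp:
  assumes G: "wf_syn m n G" and H: "wf_syn n p H"
  shows "feeds (syn_comp H G) \<subseteq> stack_rel (fst G) (feeds G) (feeds H)"
proof (rule subrelI)
  fix k k' assume "(k, k') \<in> feeds (syn_comp H G)"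
  then obtain b where k': "k' < fst G + fst H" "snd (syn_comp H G) (TV k') = SV k b"
    by (auto simp: feeds_def)
  show "(k, k') \<in> stack_rel (fst G) (feeds G) (feeds H)"
  proof (cases "k' < fst G")
    case False
    then have e: "comp_src G (snd H (TV (k' - fst G))) = SV k b"
      using k' by (simp add: snd_syn_comp_TV)
    show ?thesis
    proof (cases "snd H (TV (k' - fst G))")
      case (SIn j)
      then have "j < n" using wf_syn_into[OF H, of "TV (k' - fst G)"] k' False by simp
      then have "k < fst G" using e SIn wf_syn_into[OF G, of "TOut j"] by simp
      then show ?thesis using False by (simp add: stack_rel_def)
    next
      case (SV k2 b2)
      then show ?thesis using e False k' by (auto simp: feeds_def stack_rel_def)
    qed
  qed (use k' in \<open>auto simp: feeds_def snd_syn_comp_TV stack_rel_def\<close>)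
qed

lemma wf_syn_comp:
  assumes G: "wf_syn m n G" and H: "wf_syn n p H"
  shows "wf_syn m p (syn_comp H G)"
proof (rule wf_synI)
  show "snd (syn_comp H G) t \<in> sources m (fst (syn_comp H G))"
    if "t \<in> targets p (fst (syn_comp H G))" for t
    using that[simplified]
  proof (cases rule: targets_add_cases)
    case (1 k)
    then show ?thesis using wf_syn_into[OF G, of t] sources_mono[of _ m "fst G" m]
      by (simp add: snd_syn_comp_TV)
  next
    case (2 u)
    then show ?thesis using comp_src_into[OF G wf_syn_into[OF H 2(1)]]
      by (simp add: snd_syn_comp_comp_tgt)
  qed
  show "\<exists>t\<in>targets p (fst (syn_comp H G)). snd (syn_comp H G) t = s"
    if "s \<in> sources m (fst (syn_comp H G))" for s
    using syn_comp_onto[OF G H] that by simp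
  show "p = m + fst (syn_comp H G)" using wf_syn_outputs[OF G] wf_syn_outputs[OF H] by simp
  show "wf (feeds (syn_comp H G))"
    by (rule wf_subset[OF wf_stack_rel[OF wf_feeds[OF G] feeds_subset[OF G] wf_feeds[OF H]]
          feeds_syn_comp[OF G H]])
qed

lemma shift_tgt_in_targets: "u \<in> targets n' w \<Longrightarrow> shift_tgt n v u \<in> targets (n + n') (v + w)"
  by (cases u) auto

lemma targets_tensor_cases:
  assumes "t \<in> targets (n + n') (v + w)"
  obtains "t \<in> targets n v" | u where "u \<in> targets n' w" "t = shift_tgt n v u"
proof (cases t)
  case (TV k)
  then show thesis using that(1) that(2)[of "TV (k - v)"] assms by (cases "k < v") auto
next
  case (TOut j)
  then show thesis using that(1) that(2)[of "TOut (j - n)"] assms by (cases "j < n") auto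
qed

lemma syn_tensor_onto:
  assumes G: "wf_syn m n G" and K: "wf_syn m' n' K" and s: "s \<in> sources (m + m') (fst G + fst K)"
  shows "\<exists>t\<in>targets (n + n') (fst G + fst K). snd (syn_tensor m n G K) t = s"
proof (cases "s \<in> sources m (fst G)")
  case True
  then obtain t where "t \<in> targets n (fst G)" "snd G t = s" using wf_syn_onto[OF G] by blast
  then show ?thesis
    using targets_mono[of t n "fst G" "n + n'" "fst G + fst K"]
    by (intro bexI[of _ t]) (simp_all add: snd_syn_tensor_left)
next
  case False
  obtain s' where s': "s' \<in> sources m' (fst K)" "s = shift_src m (fst G) s'"
  proof (cases s)
    case (SIn i)
    then show thesis using that[of "SIn (i - m)"] s False by simp
  next
    case (SV k b)
    then show thesis using that[of "SV (k - fst G) b"] s False by simp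
  qed
  then obtain u where "u \<in> targets n' (fst K)" "snd K u = s'" using wf_syn_onto[OF K] by blast
  then show ?thesis
    using shift_tgt_in_targets[of u n' "fst K" n "fst G"] s' by (metis snd_syn_tensor_shift_tgt)
qed

lemma feeds_syn_tensor:
  "feeds (syn_tensor m n G K) \<subseteq> stack_rel (fst G) (feeds G) (feeds K)"
proof (rule subrelI)
  fix k k' assume "(k, k') \<in> feeds (syn_tensor m n G K)"
  then obtain b where k': "k' < fst G + fst K" "snd (syn_tensor m n G K) (TV k') = SV k b"
    by (auto simp: feeds_def)
  show "(k, k') \<in> stack_rel (fst G) (feeds G) (feeds K)"
  proof (cases "k' < fst G")
    case False
    then have "shift_src m (fst G) (snd K (TV (k' - fst G))) = SV k b"
      using k' by (simp add: snd_syn_tensor_TV)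
    then show ?thesis
      using False k' by (cases "snd K (TV (k' - fst G))") (auto simp: feeds_def stack_rel_def)
  qed (use k' in \<open>auto simp: feeds_def snd_syn_tensor_TV stack_rel_def\<close>)
qed

lemma wf_syn_tensor:
  assumes G: "wf_syn m n G" and K: "wf_syn m' n' K"
  shows "wf_syn (m + m') (n + n') (syn_tensor m n G K)"
proof (rule wf_synI)
  show "snd (syn_tensor m n G K) t \<in> sources (m + m') (fst (syn_tensor m n G K))"
    if "t \<in> targets (n + n') (fst (syn_tensor m n G K))" for t
    using that[simplified]
  proof (cases rule: targets_tensor_cases)
    case 1
    then show ?thesis
      using wf_syn_into[OF G 1] sources_mono[of "snd G t" m "fst G" "m + m'"]
      by (simp add: snd_syn_tensor_left)
  next
    case (2 u)
    then show ?thesis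
      using wf_syn_into[OF K 2(1)] by (cases "snd K u") (auto simp: snd_syn_tensor_shift_tgt)
  qed
  show "\<exists>t\<in>targets (n + n') (fst (syn_tensor m n G K)). snd (syn_tensor m n G K) t = s"
    if "s \<in> sources (m + m') (fst (syn_tensor m n G K))" for s
    using syn_tensor_onto[OF G K] that by simp
  show "n + n' = m + m' + fst (syn_tensor m n G K)"
    using wf_syn_outputs[OF G] wf_syn_outputs[OF K] by simp
  show "wf (feeds (syn_tensor m n G K))"
    by (rule wf_subset[OF wf_stack_rel[OF wf_feeds[OF G] feeds_subset[OF G] wf_feeds[OF K]]
          feeds_syn_tensor])
qed

lemma has_root_comp_left: "has_root G s i \<Longrightarrow> has_root (syn_comp H G) s i"
  by (induction s i rule: has_root.induct) (auto simp: snd_syn_comp_TV)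

lemma has_root_comp_right:
  "has_root H s j \<Longrightarrow> has_root G (snd G (TOut j)) i \<Longrightarrow> has_root (syn_comp H G) (comp_src G s) i"
  by (induction s j rule: has_root.induct) (auto simp: snd_syn_comp_TV has_root_comp_left)

lemma out_root_comp:
  assumes G: "wf_syn m n G" and H: "wf_syn n p H" and j: "j < p"
  shows "out_root (syn_comp H G) j = out_root G (out_root H j)"
  using has_root_comp_right[OF has_root_out_root(1)[OF H j]
      has_root_out_root(1)[OF G out_root_less[OF H j]]]
  by (simp add: out_root_eqI)

lemma has_root_tensor_left: "has_root G s i \<Longrightarrow> has_root (syn_tensor m n G K) s i"
  by (induction s i rule: has_root.induct) (auto simp: snd_syn_tensor_TV)

lemma has_root_tensor_right:
  "has_root K s i \<Longrightarrow> has_root (syn_tensor m n G K) (shift_src m (fst G) s) (m + i)"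
  by (induction s i rule: has_root.induct) (auto simp: snd_syn_tensor_TV)

lemma out_root_tensor:
  assumes G: "wf_syn m n G" and K: "wf_syn m' n' K" and j: "j < n + n'"
  shows "out_root (syn_tensor m n G K) j = (if j < n then out_root G j else m + out_root K (j - n))"
proof (cases "j < n")
  case True
  then show ?thesis
    using has_root_tensor_left[OF has_root_out_root(1)[OF G True]]
    by (simp add: out_root_eqI snd_syn_tensor_TOut)
next
  case False
  then show ?thesis
    using has_root_tensor_right[OF has_root_out_root(1)[OF K], of "j - n"] j
    by (simp add: out_root_eqI snd_syn_tensor_TOut)
qed

section \<open>Isomorphisms and elementary graphs\<close>

lemma ren_src_id [simp]: "ren_src id s = s"
  by (cases s) simp_all

lemma ren_tgt_id [simp]: "ren_tgt id t = t"
  by (cases t) simp_all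

lemma ren_src_comp: "ren_src q (ren_src p s) = ren_src (q \<circ> p) s"
  by (cases s) simp_all

lemma ren_tgt_comp: "ren_tgt q (ren_tgt p t) = ren_tgt (q \<circ> p) t"
  by (cases t) simp_all

lemma syn_isoI_eq:
  assumes "fst G = fst H" "\<And>t. t \<in> targets n (fst G) \<Longrightarrow> snd G t = snd H t"
  shows "syn_iso n G H"
  unfolding syn_iso_def using assms by (auto intro!: exI[of _ id])

lemma syn_iso_trans:
  assumes "syn_iso n G H" "syn_iso n H K"
  shows "syn_iso n G K"
proof -
  obtain p q where v: "fst G = fst H" "fst H = fst K"
    and p: "bij_betw p {..<fst G} {..<fst H}"
      "\<forall>t\<in>targets n (fst G). ren_src p (snd G t) = snd H (ren_tgt p t)"
    and q: "bij_betw q {..<fst H} {..<fst K}"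
      "\<forall>t\<in>targets n (fst H). ren_src q (snd H t) = snd K (ren_tgt q t)"
    using assms by (auto simp: syn_iso_def)
  have "ren_tgt p t \<in> targets n (fst H)" if "t \<in> targets n (fst G)" for t
    using that p(1) v by (cases t) (auto simp: bij_betw_def)
  then have "\<forall>t\<in>targets n (fst G). ren_src (q \<circ> p) (snd G t) = snd K (ren_tgt (q \<circ> p) t)"
    using p(2) q(2) by (simp add: ren_src_comp[symmetric] ren_tgt_comp[symmetric])
  then show ?thesis
    using v bij_betw_trans[OF p(1) q(1)] by (auto simp: syn_iso_def)
qed

lemma has_root_iso:
  assumes p: "bij_betw p {..<fst G} {..<fst H}"
    and e: "\<forall>t\<in>targets n (fst G). ren_src p (snd G t) = snd H (ren_tgt p t)"
  shows "has_root G s i \<Longrightarrow> has_root H (ren_src p s) i"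
proof (induction s i rule: has_root.induct)
  case (vertex k i b)
  have "p k < fst H" using p vertex(1) by (auto simp: bij_betw_def)
  moreover have "ren_src p (snd G (TV k)) = snd H (TV (p k))" using e vertex(1) by auto
  ultimately show ?case using vertex(3) by simp
qed simp

lemma out_root_iso:
  assumes G: "wf_syn m n G" and iso: "syn_iso n G H" and j: "j < n"
  shows "out_root H j = out_root G j"
proof -
  obtain p where p: "bij_betw p {..<fst G} {..<fst H}"
    "\<forall>t\<in>targets n (fst G). ren_src p (snd G t) = snd H (ren_tgt p t)"
    using iso by (auto simp: syn_iso_def)
  have "has_root H (ren_src p (snd G (TOut j))) (out_root G j)"
    by (rule has_root_iso[OF p has_root_out_root(1)[OF G j]])
  moreover have "ren_src p (snd G (TOut j)) = snd H (TOut j)" using p(2) j by auto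
  ultimately show ?thesis by (simp add: out_root_eqI)
qed

lemma bij_betw_lessThan_preimage:
  "bij_betw p {..<v} {..<v} \<Longrightarrow> k < v \<Longrightarrow> \<exists>k0<v. p k0 = k"
  unfolding bij_betw_def by (metis imageE lessThan_iff)

lemma ren_tgt_in_targets:
  "bij_betw p {..<v} {..<v} \<Longrightarrow> t \<in> targets n v \<Longrightarrow> ren_tgt p t \<in> targets n v"
  by (cases t) (auto simp: bij_betw_def)

lemma ren_src_in_sources:
  "bij_betw p {..<v} {..<v} \<Longrightarrow> s \<in> sources m v \<Longrightarrow> ren_src p s \<in> sources m v"
  by (cases s) (auto simp: bij_betw_def)

lemma ren_tgt_onto:
  assumes p: "bij_betw p {..<v} {..<v}" and u: "u \<in> targets n v"
  shows "\<exists>t\<in>targets n v. ren_tgt p t = u"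
proof (cases u)
  case (TV k)
  then obtain k0 where "k0 < v" "p k0 = k" using bij_betw_lessThan_preimage[OF p] u by auto
  then show ?thesis using TV by (intro bexI[of _ "TV k0"]) auto
next
  case (TOut j)
  then show ?thesis using u by (intro bexI[of _ u]) auto
qed

lemma ren_src_onto:
  assumes p: "bij_betw p {..<v} {..<v}" and s: "s \<in> sources m v"
  shows "\<exists>s0\<in>sources m v. ren_src p s0 = s"
proof (cases s)
  case (SV k b)
  then obtain k0 where "k0 < v" "p k0 = k" using bij_betw_lessThan_preimage[OF p] s by auto
  then show ?thesis using SV by (intro bexI[of _ "SV k0 b"]) auto
next
  case (SIn i)
  then show ?thesis using s by (intro bexI[of _ s]) auto
qed

lemma feeds_iso:
  assumes G: "wf_syn m n G" and p: "bij_betw p {..<fst G} {..<fst G}" and v: "fst H = fst G"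
    and e: "\<And>t. t \<in> targets n (fst G) \<Longrightarrow> ren_src p (snd G t) = snd H (ren_tgt p t)"
  shows "feeds H \<subseteq> inv_image (feeds G) (inv_into {..<fst G} p)"
proof (rule subrelI)
  fix k k' assume "(k, k') \<in> feeds H"
  then obtain b where k': "k' < fst G" "snd H (TV k') = SV k b"
    using v by (auto simp: feeds_def)
  then obtain k0' where k0': "k0' < fst G" "p k0' = k'"
    using bij_betw_lessThan_preimage[OF p] by blast
  then have "ren_src p (snd G (TV k0')) = SV k b" using e k' by auto
  moreover have "snd G (TV k0') \<in> sources m (fst G)" using wf_syn_into[OF G] k0' by simp
  ultimately obtain k0 where "snd G (TV k0') = SV k0 b" "k0 < fst G" "p k0 = k"
    by (cases "snd G (TV k0')") auto
  then show "(k, k') \<in> inv_image (feeds G) (inv_into {..<fst G} p)"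
    using k0' p by (auto simp: feeds_def bij_betw_inv_into_left)
qed

lemma wf_syn_iso:
  assumes G: "wf_syn m n G" and iso: "syn_iso n G H"
  shows "wf_syn m n H"
proof -
  obtain p where v: "fst H = fst G" and p: "bij_betw p {..<fst G} {..<fst G}"
    and e: "\<And>t. t \<in> targets n (fst G) \<Longrightarrow> ren_src p (snd G t) = snd H (ren_tgt p t)"
    using iso by (auto simp: syn_iso_def)
  show ?thesis
  proof (rule wf_synI)
    show "snd H u \<in> sources m (fst H)" if u: "u \<in> targets n (fst H)" for u
    proof -
      obtain t where t: "t \<in> targets n (fst G)" "ren_tgt p t = u"
        using ren_tgt_onto[OF p] u v by auto
      then show ?thesis
        using e[OF t(1)] ren_src_in_sources[OF p wf_syn_into[OF G t(1)]] v by simp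
    qed
    show "\<exists>u\<in>targets n (fst H). snd H u = s" if s: "s \<in> sources m (fst H)" for s
    proof -
      obtain s0 where s0: "s0 \<in> sources m (fst G)" "ren_src p s0 = s"
        using ren_src_onto[OF p] s v by auto
      then obtain t where t: "t \<in> targets n (fst G)" "snd G t = s0"
        using wf_syn_onto[OF G] by blast
      then show ?thesis
        using e[OF t(1)] s0 ren_tgt_in_targets[OF p t(1)] v by metis
    qed
    show "n = m + fst H" using wf_syn_outputs[OF G] v by simp
    show "wf (feeds H)"
      by (rule wf_subset[OF wf_inv_image[OF wf_feeds[OF G]] feeds_iso[OF G p v e]])
  qed
qed

definition syn_perm :: "(nat \<Rightarrow> nat) \<Rightarrow> sgraph" where
  "syn_perm f = (0, \<lambda>t. case t of TOut j \<Rightarrow> SIn (f j) | TV k \<Rightarrow> SIn 0)"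

lemma syn_perm_simps [simp]: "fst (syn_perm f) = 0" "snd (syn_perm f) (TOut j) = SIn (f j)"
  by (simp_all add: syn_perm_def)

lemma wf_syn_perm:
  assumes inj: "inj_on f {..<n}" and into: "\<And>j. j < n \<Longrightarrow> f j < n"
  shows "wf_syn n n (syn_perm f)"
proof (rule wf_synI)
  have "f ` {..<n} = {..<n}" using endo_inj_surj[OF _ _ inj] into by auto
  then have "\<exists>j<n. f j = i" if "i < n" for i
    using that by (metis imageE lessThan_iff)
  then show "\<exists>t\<in>targets n (fst (syn_perm f)). snd (syn_perm f) t = s"
    if s: "s \<in> sources n (fst (syn_perm f))" for s
  proof (cases s)
    case (SIn i)
    then obtain j where "j < n" "f j = i" using s \<open>\<And>i. i < n \<Longrightarrow> \<exists>j<n. f j = i\<close> by auto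
    then show ?thesis using SIn by (intro bexI[of _ "TOut j"]) auto
  qed (use s in simp)
  show "wf (feeds (syn_perm f))" by (simp add: feeds_def)
  show "snd (syn_perm f) t \<in> sources n (fst (syn_perm f))"
    if "t \<in> targets n (fst (syn_perm f))" for t
    using that into by (cases t) auto
qed simp

lemma wf_syn_perm_transpose: "a < n \<Longrightarrow> b < n \<Longrightarrow> wf_syn n n (syn_perm (transpose a b))"
  by (rule wf_syn_perm) (auto simp: transpose_def)

lemma out_root_perm [simp]: "out_root (syn_perm f) j = f j"
  by (rule out_root_eqI) simp

lemma syn_id_eq_perm: "syn_id n = syn_perm id"
  by (auto simp: syn_id_def syn_perm_def fun_eq_iff split: tgt.split)

lemma wf_syn_id: "wf_syn n n (syn_id n)"
  unfolding syn_id_eq_perm by (rule wf_syn_perm) auto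

lemma wf_syn_swap: "wf_syn 2 2 syn_swap"
proof -
  have "syn_swap = syn_perm (\<lambda>j. if j = 0 then 1 else 0)"
    by (auto simp: syn_swap_def syn_perm_def fun_eq_iff split: tgt.split)
  also have "wf_syn 2 2 \<dots>" by (rule wf_syn_perm) (auto simp: inj_on_def)
  finally show ?thesis .
qed

lemma wf_syn_delta: "wf_syn 1 2 syn_delta"
proof (rule wf_synI)
  show "\<exists>t\<in>targets 2 (fst syn_delta). snd syn_delta t = s"
    if "s \<in> sources 1 (fst syn_delta)" for s
  proof (cases s)
    case (SIn i)
    then show ?thesis using that by (auto simp: syn_delta_def intro!: bexI[of _ "TV 0"])
  next
    case (SV k b)
    then show ?thesis
      using that by (auto simp: syn_delta_def intro!: bexI[of _ "TOut (if b then 1 else 0)"])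
  qed
  show "wf (feeds syn_delta)" by (rule wf_subset[of "{}"]) (auto simp: feeds_def syn_delta_def)
  show "snd syn_delta t \<in> sources 1 (fst syn_delta)" if "t \<in> targets 2 (fst syn_delta)" for t
    using that by (cases t) (auto simp: syn_delta_def)
qed (simp add: syn_delta_def)

text \<open>The generator on input a, its right branch becoming the new last output m.\<close>
definition syn_split :: "nat \<Rightarrow> nat \<Rightarrow> sgraph" where
  "syn_split m a = (1, \<lambda>t. case t of TV k \<Rightarrow> SIn a
      | TOut j \<Rightarrow> (if j = a then SV 0 False else if j = m then SV 0 True else SIn j))"

lemma syn_split_simps [simp]:
  "fst (syn_split m a) = 1" "snd (syn_split m a) (TV k) = SIn a"
  "snd (syn_split m a) (TOut j) = (if j = a then SV 0 False else if j = m then SV 0 True else SIn j)"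
  by (simp_all add: syn_split_def)

lemma wf_syn_split:
  assumes a: "a < m"
  shows "wf_syn m (Suc m) (syn_split m a)"
proof (rule wf_synI)
  show "snd (syn_split m a) t \<in> sources m (fst (syn_split m a))"
    if "t \<in> targets (Suc m) (fst (syn_split m a))" for t
    using that a by (cases t) auto
  show "\<exists>t\<in>targets (Suc m) (fst (syn_split m a)). snd (syn_split m a) t = s"
    if "s \<in> sources m (fst (syn_split m a))" for s
  proof (cases s)
    case (SIn i)
    then show ?thesis
      using that a by (auto intro!: bexI[of _ "if i = a then TV 0 else TOut i"])
  next
    case (SV k b)
    then show ?thesis using that a by (auto intro!: bexI[of _ "TOut (if b then m else a)"])
  qed
  show "wf (feeds (syn_split m a))" by (rule wf_subset[of "{}"]) (auto simp: feeds_def)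
qed simp

lemma out_root_split: "j < Suc m \<Longrightarrow> out_root (syn_split m a) j = (if j = m then a else j)"
  by (rule out_root_eqI) auto

lemma out_root_comp_split:
  assumes "a < m" "wf_syn (Suc m) n K" "j < n"
  shows "out_root (syn_comp K (syn_split m a)) j = (if out_root K j = m then a else out_root K j)"
  using out_root_comp[OF wf_syn_split[OF assms(1)] assms(2,3)] out_root_less[OF assms(2,3)]
  by (simp add: out_root_split)

section \<open>Congruent graphs have the same roots\<close>

lemma cocom_cong_wf: "cocom_cong m n G H \<Longrightarrow> wf_syn m n G \<and> wf_syn m n H"
proof (induction rule: cocom_cong.induct)
  case coassoc
  have "wf_syn (1 + 1) (2 + 1) (syn_tensor 1 2 syn_delta (syn_id 1))"
    and "wf_syn (1 + 1) (1 + 2) (syn_tensor 1 1 (syn_id 1) syn_delta)"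
    by (intro wf_syn_tensor wf_syn_delta wf_syn_id)+
  then show ?case using wf_syn_comp[OF wf_syn_delta] by (simp add: numeral_eq_Suc)
next
  case cocomm
  show ?case using wf_syn_comp[OF wf_syn_delta wf_syn_swap] wf_syn_delta by simp
qed (auto intro: wf_syn_comp wf_syn_tensor)

lemma out_root_one_input: "wf_syn 1 n G \<Longrightarrow> j < n \<Longrightarrow> out_root G j = 0"
  using out_root_less by fastforce

lemma out_root_cocom_cong: "cocom_cong m n G H \<Longrightarrow> \<forall>j<n. out_root G j = out_root H j"
proof (induction rule: cocom_cong.induct)
  case (iso m n G H)
  then show ?case using out_root_iso by metis
next
  case coassoc
  then show ?case using cocom_cong_wf[OF cocom_cong.coassoc] out_root_one_input by metis
next
  case cocomm
  then show ?case using cocom_cong_wf[OF cocom_cong.cocomm] out_root_one_input by metis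
next
  case (comp_post m n G H p K)
  have "wf_syn m n G" "wf_syn m n H" using cocom_cong_wf[OF comp_post(1)] by auto
  then show ?case
    using comp_post.IH out_root_comp[OF _ comp_post(2)] out_root_less[OF comp_post(2)] by metis
next
  case (comp_pre n p G H m K)
  have "wf_syn n p G" "wf_syn n p H" using cocom_cong_wf[OF comp_pre(1)] by auto
  then show ?case using comp_pre.IH out_root_comp[OF comp_pre(2)] by metis
next
  case (tens_l m n G H m' n' K)
  have "wf_syn m n G" "wf_syn m n H" using cocom_cong_wf[OF tens_l(1)] by auto
  then show ?case using tens_l.IH out_root_tensor[OF _ tens_l(2)] by simp
next
  case (tens_r m' n' G H m n K)
  have "wf_syn m' n' G" "wf_syn m' n' H" using cocom_cong_wf[OF tens_r(1)] by auto
  then show ?case using tens_r.IH out_root_tensor[OF tens_r(2)] by simp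
qed simp_all

section \<open>Realising root maps and peeling off vertices\<close>

text \<open>While f is not injective, give one of two outputs with a common root i a fresh
  input m, and then split i to feed it.\<close>
lemma exists_syn_with_out_root:
  assumes into: "\<And>j. j < n \<Longrightarrow> f j < m" and onto: "\<And>i. i < m \<Longrightarrow> \<exists>j<n. f j = i"
  shows "\<exists>G. wf_syn m n G \<and> (\<forall>j<n. out_root G j = f j)"
  using assms
proof (induction "n - m" arbitrary: m f)
  case 0
  have "{..<m} \<subseteq> f ` {..<n}" using "0.prems"(2) by force
  then have "m \<le> n" using card_mono[OF _ \<open>{..<m} \<subseteq> f ` {..<n}\<close>] card_image_le[of "{..<n}" f]
    by simp
  then have "m = n" using "0.hyps" by simp
  then have "f ` {..<n} = {..<n}"
    using \<open>{..<m} \<subseteq> f ` {..<n}\<close> "0.prems"(1) by auto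
  then have "inj_on f {..<n}" by (simp add: eq_card_imp_inj_on)
  then show ?case
    using \<open>m = n\<close> "0.prems"(1) by (intro exI[of _ "syn_perm f"]) (auto intro: wf_syn_perm)
next
  case (Suc d)
  have "\<not> inj_on f {..<n}"
  proof
    assume "inj_on f {..<n}"
    then have "card (f ` {..<n}) = n" by (simp add: card_image)
    moreover have "card (f ` {..<n}) \<le> m"
      using card_mono[of "{..<m}" "f ` {..<n}"] Suc.prems(1) by fastforce
    ultimately show False using Suc.hyps(2) by simp
  qed
  then obtain j1 j2 where j: "j1 < n" "j2 < n" "j1 \<noteq> j2" "f j1 = f j2"
    unfolding inj_on_def by auto
  let ?a = "f j2"
  have a: "?a < m" using Suc.prems(1) j(2) .
  have "\<exists>G'. wf_syn (Suc m) n G' \<and> (\<forall>j<n. out_root G' j = (f(j2 := m)) j)"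
  proof (rule Suc.hyps(1))
    show "d = n - Suc m" using Suc.hyps(2) by simp
    show "(f(j2 := m)) j < Suc m" if "j < n" for j using Suc.prems(1) that by (simp add: less_SucI)
    show "\<exists>j<n. (f(j2 := m)) j = i" if i: "i < Suc m" for i
    proof (cases "i = m")
      case False
      then have "i < m" using i by simp
      then obtain j where "j < n" "f j = i" using Suc.prems(2) by blast
      then show ?thesis
        using j by (cases "j = j2") (auto intro: exI[of _ j1] exI[of _ j])
    qed (use j in auto)
  qed
  then obtain G' where G': "wf_syn (Suc m) n G'" "\<forall>j<n. out_root G' j = (f(j2 := m)) j" by blast
  have "\<forall>j<n. out_root (syn_comp G' (syn_split m ?a)) j = f j"
    using out_root_comp_split[OF a G'(1)] G'(2) Suc.prems(1) by (auto simp: less_not_refl2)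
  then show ?case using wf_syn_comp[OF wf_syn_split[OF a] G'(1)] by blast
qed

lemma exists_vertex_fed_by_input:
  assumes G: "wf_syn m n G" and v: "0 < fst G"
  obtains k a where "k < fst G" "a < m" "snd G (TV k) = SIn a"
proof -
  obtain k where k: "k < fst G" and min: "\<And>k'. (k', k) \<in> feeds G \<Longrightarrow> \<not> k' < fst G"
    using wfE_min[OF wf_feeds[OF G], of 0 "{..<fst G}"] v by auto
  have s: "snd G (TV k) \<in> sources m (fst G)" using wf_syn_into[OF G] k by simp
  show thesis
  proof (cases "snd G (TV k)")
    case (SIn a)
    then show thesis using that k s by simp
  next
    case (SV k' b)
    then have "(k', k) \<in> feeds G" using k by (auto simp: feeds_def)
    then show thesis using min s SV by simp
  qed
qed

fun unsplit :: "nat \<Rightarrow> nat \<Rightarrow> src \<Rightarrow> src" where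
  "unsplit m a (SIn j) = SIn j"
| "unsplit m a (SV k b) = (if k = 0 then SIn (if b then m else a) else SV (k - 1) b)"

lemma comp_src_split_unsplit:
  "a < m \<Longrightarrow> s \<in> sources m (Suc v) \<Longrightarrow> s \<noteq> SIn a \<Longrightarrow>
     comp_src (syn_split m a) (unsplit m a s) = s"
  by (cases s) auto

lemma unsplit_comp_src_split:
  "a < m \<Longrightarrow> s \<in> sources (Suc m) v \<Longrightarrow> unsplit m a (comp_src (syn_split m a) s) = s"
  by (cases s) auto

lemma unsplit_into: "a < m \<Longrightarrow> s \<in> sources m (Suc v) \<Longrightarrow> unsplit m a s \<in> sources (Suc m) v"
  by (cases s) auto

lemma unsplit_eq_SV: "unsplit m a s = SV k b \<longleftrightarrow> s = SV (Suc k) b"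
  by (cases s) auto

text \<open>When vertex 0 is fed by input a, it can be replaced by a fresh input m; composing with
  the split of a gives back the graph.\<close>
definition syn_unsplit :: "nat \<Rightarrow> nat \<Rightarrow> sgraph \<Rightarrow> sgraph" where
  "syn_unsplit m a G = (fst G - 1, \<lambda>t. unsplit m a (snd G (comp_tgt 1 t)))"

lemma comp_tgt_1_in_targets:
  "fst G = Suc v \<Longrightarrow> u \<in> targets n v \<Longrightarrow> comp_tgt 1 u \<in> targets n (fst G)"
  using comp_tgt_in_targets[of u n v 1] by simp

lemma snd_comp_tgt_ne_first:
  assumes G: "wf_syn m n G" "fst G = Suc v" and u: "u \<in> targets n v"
  shows "snd G (comp_tgt 1 u) \<noteq> snd G (TV 0)"
proof
  assume "snd G (comp_tgt 1 u) = snd G (TV 0)"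
  then have "comp_tgt 1 u = TV 0"
    using wf_syn_inj[OF G(1) comp_tgt_1_in_targets[OF G(2) u]] G(2) by simp
  then show False by (cases u) simp_all
qed

lemma wf_syn_unsplit:
  assumes G: "wf_syn m n G" "fst G = Suc v" and a: "a < m" "snd G (TV 0) = SIn a"
  shows "wf_syn (Suc m) n (syn_unsplit m a G)"
proof (rule wf_synI)
  let ?G' = "syn_unsplit m a G"
  have fst_G': "fst ?G' = v" using G(2) by (simp add: syn_unsplit_def)
  show "snd ?G' u \<in> sources (Suc m) (fst ?G')" if u: "u \<in> targets n (fst ?G')" for u
    using unsplit_into[OF a(1)] wf_syn_into[OF G(1) comp_tgt_1_in_targets[OF G(2)]] u G(2) fst_G'
    by (simp add: syn_unsplit_def)
  show "\<exists>u\<in>targets n (fst ?G'). snd ?G' u = s" if s: "s \<in> sources (Suc m) (fst ?G')" for s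
  proof -
    let ?s = "comp_src (syn_split m a) s"
    have "?s \<in> sources m (fst G)" using s a G(2) fst_G' by (cases s) auto
    moreover have "?s \<noteq> SIn a" using a by (cases s) auto
    ultimately obtain t where t: "t \<in> targets n (1 + v)" "snd G t = ?s" "t \<noteq> TV 0"
      using wf_syn_onto[OF G(1)] a(2) G(2) by fastforce
    from t(1) obtain u where u: "u \<in> targets n v" "t = comp_tgt 1 u"
      using t(3) by (cases rule: targets_add_cases) auto
    then have "snd ?G' u = s"
      using t(2) s fst_G' unsplit_comp_src_split[OF a(1), of s v] by (simp add: syn_unsplit_def)
    then show ?thesis using u(1) fst_G' by auto
  qed
  show "n = Suc m + fst ?G'" using wf_syn_outputs[OF G(1)] G(2) fst_G' by simp
  have "feeds ?G' \<subseteq> inv_image (feeds G) Suc"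
  proof (rule subrelI)
    fix k k' assume "(k, k') \<in> feeds ?G'"
    then obtain b where "k' < v" "unsplit m a (snd G (TV (Suc k'))) = SV k b"
      using fst_G' by (auto simp: feeds_def syn_unsplit_def)
    then show "(k, k') \<in> inv_image (feeds G) Suc"
      using G(2) by (auto simp: feeds_def unsplit_eq_SV)
  qed
  then show "wf (feeds ?G')" by (rule wf_subset[OF wf_inv_image[OF wf_feeds[OF G(1)]]])
qed

lemma syn_iso_unsplit:
  assumes G: "wf_syn m n G" "fst G = Suc v" and a: "a < m" "snd G (TV 0) = SIn a"
  shows "syn_iso n G (syn_comp (syn_unsplit m a G) (syn_split m a))"
proof (rule syn_isoI_eq)
  let ?G' = "syn_unsplit m a G"
  show "fst G = fst (syn_comp ?G' (syn_split m a))" using G(2) by (simp add: syn_unsplit_def)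
  show "snd G t = snd (syn_comp ?G' (syn_split m a)) t" if t: "t \<in> targets n (fst G)" for t
    using t[unfolded G(2) plus_1_eq_Suc[symmetric]]
  proof (cases rule: targets_add_cases)
    case (1 k)
    then show ?thesis using a by (simp add: snd_syn_comp_TV)
  next
    case (2 u)
    have "snd (syn_comp ?G' (syn_split m a)) t = comp_src (syn_split m a) (snd ?G' u)"
      using 2(2) snd_syn_comp_comp_tgt[of ?G' "syn_split m a" u] by simp
    also have "\<dots> = snd G t"
      using comp_src_split_unsplit[OF a(1)
          wf_syn_into[OF G(1) comp_tgt_1_in_targets[OF G(2) 2(1)], unfolded G(2)]]
        snd_comp_tgt_ne_first[OF G 2(1)] 2(2) G(2) a(2) by (simp add: syn_unsplit_def)
    finally show ?thesis by simp
  qed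
qed

lemma syn_peel:
  assumes G: "wf_syn m n G" and v: "fst G = Suc v"
  obtains a G' where "a < m" "wf_syn (Suc m) n G'" "syn_iso n G (syn_comp G' (syn_split m a))"
proof -
  obtain k a where k: "k < fst G" "a < m" "snd G (TV k) = SIn a"
    using exists_vertex_fed_by_input[OF G] v by auto
  let ?p = "transpose 0 k"
  define H where "H = (fst G, \<lambda>t. ren_src ?p (snd G (ren_tgt ?p t)))"
  have ren_tgt_p: "ren_tgt ?p (ren_tgt ?p t) = t" for t by (cases t) simp_all
  have GH: "syn_iso n G H"
    unfolding syn_iso_def
  proof (intro conjI exI[of _ ?p] ballI)
    show "fst G = fst H" by (simp add: H_def)
    show "bij_betw ?p {..<fst G} {..<fst H}" using k(1) v by (simp add: H_def)
    show "ren_src ?p (snd G t) = snd H (ren_tgt ?p t)" for t by (simp add: H_def ren_tgt_p)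
  qed
  have H: "wf_syn m n H" by (rule wf_syn_iso[OF G GH])
  have Hv: "fst H = Suc v" and H0: "snd H (TV 0) = SIn a" using v k(3) by (simp_all add: H_def)
  show thesis
    using that[OF k(2) wf_syn_unsplit[OF H Hv k(2) H0]
        syn_iso_trans[OF GH syn_iso_unsplit[OF H Hv k(2) H0]]] .
qed

lemma out_root_surj:
  assumes "wf_syn m n G" "i < m"
  shows "\<exists>j<n. out_root G j = i"
  using assms
proof (induction "fst G" arbitrary: m G i)
  case 0
  then obtain t where t: "t \<in> targets n (fst G)" "snd G t = SIn i"
    using wf_syn_onto[of m n G "SIn i"] by auto
  then obtain j where "t = TOut j" "j < n" using "0.hyps" by (cases t) auto
  then show ?case using t by (intro exI[of _ j]) (simp add: out_root_eqI)
next
  case (Suc v)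
  obtain a G' where G': "a < m" "wf_syn (Suc m) n G'" "syn_iso n G (syn_comp G' (syn_split m a))"
    using syn_peel[OF Suc.prems(1) Suc.hyps(2)[symmetric]] by blast
  have "v = fst G'" using wf_syn_outputs[OF Suc.prems(1)] wf_syn_outputs[OF G'(2)] Suc.hyps(2) by simp
  moreover have "i < Suc m" using Suc.prems(2) by simp
  ultimately obtain j where j: "j < n" "out_root G' j = i" using Suc.hyps(1) G'(2) by blast
  have "out_root G j = out_root (syn_comp G' (syn_split m a)) j"
    using out_root_iso[OF Suc.prems(1) G'(3) j(1)] by simp
  then show ?case using out_root_comp_split[OF G'(1,2) j(1)] j Suc.prems(2) by auto
qed

section \<open>The generating relations in context\<close>

lemma cocom_cong_iso_transfer:
  assumes "cocom_cong m n G H" "syn_iso n G G'" "syn_iso n H H'" "wf_syn m n G'" "wf_syn m n H'"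
  shows "cocom_cong m n G' H'"
proof -
  have "wf_syn m n G" "wf_syn m n H" using cocom_cong_wf[OF assms(1)] by auto
  then have "cocom_cong m n G' G" "cocom_cong m n H H'"
    using assms(2-5) by (auto intro: cocom_cong.iso cocom_cong.sym)
  then show ?thesis using assms(1) by (blast intro: cocom_cong.trans)
qed

text \<open>The context in which the generating relations on graphs 1 \<rightarrow> q are used: the graph
  acts on one of Suc r inputs, between two wirings.\<close>
definition syn_embed :: "(nat \<Rightarrow> nat) \<Rightarrow> (nat \<Rightarrow> nat) \<Rightarrow> nat \<Rightarrow> nat \<Rightarrow> sgraph \<Rightarrow> sgraph" where
  "syn_embed pi rho q r Z =
     syn_comp (syn_perm rho) (syn_comp (syn_tensor 1 q Z (syn_id r)) (syn_perm pi))"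

lemma fst_syn_embed [simp]: "fst (syn_embed pi rho q r Z) = fst Z"
  by (simp add: syn_embed_def syn_id_def)

lemma snd_syn_embed_TV:
  "k < fst Z \<Longrightarrow> snd (syn_embed pi rho q r Z) (TV k) = comp_src (syn_perm pi) (snd Z (TV k))"
  by (simp add: syn_embed_def snd_syn_comp_TV snd_syn_tensor_TV syn_id_def)

lemma snd_syn_embed_TOut:
  "snd (syn_embed pi rho q r Z) (TOut j) =
     (if rho j < q then comp_src (syn_perm pi) (snd Z (TOut (rho j))) else SIn (pi (Suc (rho j - q))))"
  by (simp add: syn_embed_def snd_syn_comp_TV snd_syn_tensor_TOut syn_id_def)

lemma cocom_cong_embed:
  assumes "cocom_cong 1 q X Y" "wf_syn (Suc r) (Suc r) (syn_perm pi)" "wf_syn (q + r) n (syn_perm rho)"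
  shows "cocom_cong (Suc r) n (syn_embed pi rho q r X) (syn_embed pi rho q r Y)"
proof -
  have "cocom_cong (1 + r) (q + r) (syn_tensor 1 q X (syn_id r)) (syn_tensor 1 q Y (syn_id r))"
    by (rule cocom_cong.tens_l[OF assms(1) wf_syn_id])
  then have "cocom_cong (Suc r) (q + r)
      (syn_comp (syn_tensor 1 q X (syn_id r)) (syn_perm pi))
      (syn_comp (syn_tensor 1 q Y (syn_id r)) (syn_perm pi))"
    using cocom_cong.comp_pre[OF _ assms(2)] by simp
  then show ?thesis unfolding syn_embed_def by (rule cocom_cong.comp_post[OF _ assms(3)])
qed

lemma cocom_cong_split_swap:
  assumes a: "a < m"
  shows "cocom_cong m (Suc m) (syn_split m a) (syn_comp (syn_perm (transpose a m)) (syn_split m a))"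
proof -
  obtain r where r: "m = Suc r" using a by (cases m) auto
  define rho where "rho j = (if j = a then 0 else if j = m then 1 else Suc (transpose 0 a j))" for j
  have "wf_syn (Suc m) (Suc m) (syn_perm rho)"
    by (rule wf_syn_perm) (use a in \<open>auto simp: inj_on_def rho_def transpose_def split: if_splits\<close>)
  then have "wf_syn (2 + r) (Suc m) (syn_perm rho)" using r by simp
  then have c: "cocom_cong m (Suc m) (syn_embed (transpose 0 a) rho 2 r (syn_comp syn_swap syn_delta))
      (syn_embed (transpose 0 a) rho 2 r syn_delta)"
    using cocom_cong_embed[OF cocom_cong.cocomm] wf_syn_perm_transpose[of 0 m a] a r by simp
  have "syn_iso (Suc m) (syn_embed (transpose 0 a) rho 2 r syn_delta) (syn_split m a)"
  proof (rule syn_isoI_eq)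
    fix t assume "t \<in> targets (Suc m) (fst (syn_embed (transpose 0 a) rho 2 r syn_delta))"
    then show "snd (syn_embed (transpose 0 a) rho 2 r syn_delta) t = snd (syn_split m a) t"
      using a by (cases t) (auto simp: syn_delta_def snd_syn_embed_TV snd_syn_embed_TOut
          rho_def transpose_def)
  qed (simp add: syn_delta_def)
  moreover have "syn_iso (Suc m) (syn_embed (transpose 0 a) rho 2 r (syn_comp syn_swap syn_delta))
      (syn_comp (syn_perm (transpose a m)) (syn_split m a))"
  proof (rule syn_isoI_eq)
    fix t assume "t \<in> targets (Suc m) (fst (syn_embed (transpose 0 a) rho 2 r (syn_comp syn_swap syn_delta)))"
    then show "snd (syn_embed (transpose 0 a) rho 2 r (syn_comp syn_swap syn_delta)) t =
        snd (syn_comp (syn_perm (transpose a m)) (syn_split m a)) t"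
      using a by (cases t) (auto simp: syn_delta_def syn_swap_def snd_syn_comp_TV
          snd_syn_embed_TV snd_syn_embed_TOut rho_def transpose_def)
  qed (simp add: syn_delta_def syn_swap_def)
  moreover have "wf_syn m (Suc m) (syn_comp (syn_perm (transpose a m)) (syn_split m a))"
    using a by (intro wf_syn_comp[OF wf_syn_split] wf_syn_perm_transpose) auto
  ultimately show ?thesis
    using cocom_cong_iso_transfer[OF c] wf_syn_split[OF a] by (blast intro: cocom_cong.sym)
qed

lemma coassoc_lhs_simps:
  "fst (syn_comp (syn_tensor 1 2 syn_delta (syn_id 1)) syn_delta) = 2"
  "snd (syn_comp (syn_tensor 1 2 syn_delta (syn_id 1)) syn_delta) (TV 0) = SIn 0"
  "snd (syn_comp (syn_tensor 1 2 syn_delta (syn_id 1)) syn_delta) (TV (Suc 0)) = SV 0 False"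
  "snd (syn_comp (syn_tensor 1 2 syn_delta (syn_id 1)) syn_delta) (TOut j) =
     (if j = 0 then SV 1 False else if j = 1 then SV 1 True else SV 0 True)"
  by (simp_all add: snd_syn_comp_TV snd_syn_tensor_TV snd_syn_tensor_TOut syn_delta_def syn_id_def)

lemma coassoc_rhs_simps:
  "fst (syn_comp (syn_tensor 1 1 (syn_id 1) syn_delta) syn_delta) = 2"
  "snd (syn_comp (syn_tensor 1 1 (syn_id 1) syn_delta) syn_delta) (TV 0) = SIn 0"
  "snd (syn_comp (syn_tensor 1 1 (syn_id 1) syn_delta) syn_delta) (TV (Suc 0)) = SV 0 True"
  "snd (syn_comp (syn_tensor 1 1 (syn_id 1) syn_delta) syn_delta) (TOut j) =
     (if j = 0 then SV 0 False else if j = 1 then SV 1 False else SV 1 True)"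
  by (simp_all add: snd_syn_comp_TV snd_syn_tensor_TV snd_syn_tensor_TOut syn_delta_def syn_id_def)

lemma cocom_cong_split_split:
  assumes a: "a < m"
  shows "cocom_cong m (Suc (Suc m)) (syn_comp (syn_split (Suc m) a) (syn_split m a))
     (syn_comp (syn_perm (transpose m (Suc m))) (syn_comp (syn_split (Suc m) m) (syn_split m a)))"
proof -
  obtain r where r: "m = Suc r" using a by (cases m) auto
  define rho where "rho j = (if j = a then 0 else if j = Suc m then 1 else if j = m then 2
      else Suc (Suc (transpose 0 a j)))" for j
  define X where "X = syn_comp (syn_tensor 1 2 syn_delta (syn_id 1)) syn_delta"
  define Y where "Y = syn_comp (syn_tensor 1 1 (syn_id 1) syn_delta) syn_delta"
  note X = coassoc_lhs_simps[folded X_def] and Y = coassoc_rhs_simps[folded Y_def]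
  have less_2: "k < 2 \<longleftrightarrow> k = 0 \<or> k = 1" for k :: nat by auto
  have "wf_syn (Suc (Suc m)) (Suc (Suc m)) (syn_perm rho)"
    by (rule wf_syn_perm) (use a in \<open>auto simp: inj_on_def rho_def transpose_def split: if_splits\<close>)
  then have "wf_syn (3 + r) (Suc (Suc m)) (syn_perm rho)" using r by (simp add: numeral_eq_Suc)
  then have c: "cocom_cong m (Suc (Suc m)) (syn_embed (transpose 0 a) rho 3 r X)
      (syn_embed (transpose 0 a) rho 3 r Y)"
    using cocom_cong_embed[OF cocom_cong.coassoc] wf_syn_perm_transpose[of 0 m a] a r
    by (simp add: X_def Y_def)
  have "syn_iso (Suc (Suc m)) (syn_embed (transpose 0 a) rho 3 r X)
      (syn_comp (syn_split (Suc m) a) (syn_split m a))"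
  proof (rule syn_isoI_eq)
    fix t assume "t \<in> targets (Suc (Suc m)) (fst (syn_embed (transpose 0 a) rho 3 r X))"
    then show "snd (syn_embed (transpose 0 a) rho 3 r X) t =
        snd (syn_comp (syn_split (Suc m) a) (syn_split m a)) t"
      using a by (cases t) (auto simp: X less_2 snd_syn_embed_TV snd_syn_embed_TOut
          snd_syn_comp_TV rho_def transpose_def)
  qed (simp add: X)
  moreover have "syn_iso (Suc (Suc m)) (syn_embed (transpose 0 a) rho 3 r Y)
      (syn_comp (syn_perm (transpose m (Suc m))) (syn_comp (syn_split (Suc m) m) (syn_split m a)))"
  proof (rule syn_isoI_eq)
    fix t assume "t \<in> targets (Suc (Suc m)) (fst (syn_embed (transpose 0 a) rho 3 r Y))"
    then show "snd (syn_embed (transpose 0 a) rho 3 r Y) t =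
        snd (syn_comp (syn_perm (transpose m (Suc m))) (syn_comp (syn_split (Suc m) m) (syn_split m a))) t"
      using a by (cases t) (auto simp: Y less_2 snd_syn_embed_TV snd_syn_embed_TOut
          snd_syn_comp_TV rho_def transpose_def)
  qed (simp add: Y)
  moreover have "wf_syn m (Suc (Suc m)) (syn_comp (syn_split (Suc m) a) (syn_split m a))"
    using a by (intro wf_syn_comp[OF wf_syn_split wf_syn_split]) auto
  moreover have "wf_syn m (Suc (Suc m))
      (syn_comp (syn_perm (transpose m (Suc m))) (syn_comp (syn_split (Suc m) m) (syn_split m a)))"
    using a by (intro wf_syn_comp[OF wf_syn_comp[OF wf_syn_split wf_syn_split]]
        wf_syn_perm_transpose) auto
  ultimately show ?thesis by (rule cocom_cong_iso_transfer[OF c])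
qed

lemma syn_iso_splits_commute:
  assumes "a < m" "b < m" "a \<noteq> b"
  shows "syn_iso (Suc (Suc m)) (syn_comp (syn_split (Suc m) b) (syn_split m a))
     (syn_comp (syn_perm (transpose m (Suc m))) (syn_comp (syn_split (Suc m) a) (syn_split m b)))"
  unfolding syn_iso_def
proof (intro conjI exI[of _ "transpose 0 1"] ballI)
  show "bij_betw (transpose 0 1) {..<fst (syn_comp (syn_split (Suc m) b) (syn_split m a))}
     {..<fst (syn_comp (syn_perm (transpose m (Suc m)))
         (syn_comp (syn_split (Suc m) a) (syn_split m b)))}"
    by simp
  fix t assume t: "t \<in> targets (Suc (Suc m)) (fst (syn_comp (syn_split (Suc m) b) (syn_split m a)))"
  show "ren_src (transpose 0 1) (snd (syn_comp (syn_split (Suc m) b) (syn_split m a)) t) =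
     snd (syn_comp (syn_perm (transpose m (Suc m))) (syn_comp (syn_split (Suc m) a) (syn_split m b)))
       (ren_tgt (transpose 0 1) t)"
  proof (cases t)
    case (TV k)
    then have "k = 0 \<or> k = 1" using t by auto
    then show ?thesis using TV assms by (auto simp: snd_syn_comp_TV transpose_def)
  next
    case (TOut j)
    then show ?thesis using t assms by (auto simp: transpose_def)
  qed
qed simp

section \<open>Graphs with the same roots are congruent\<close>

lemma nonempty_proper_subsets_connected:
  assumes sym: "\<And>P Q. r P Q \<Longrightarrow> r Q P"
    and trans: "\<And>P Q S. r P Q \<Longrightarrow> r Q S \<Longrightarrow> r P S"
    and compl: "\<And>P. P \<noteq> {} \<Longrightarrow> P \<subset> C \<Longrightarrow> r P (C - P)"
    and nested: "\<And>P Q. P \<noteq> {} \<Longrightarrow> P \<subset> Q \<Longrightarrow> Q \<subset> C \<Longrightarrow> r P Q"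
    and P: "P \<noteq> {}" "P \<subset> C" and Q: "Q \<noteq> {}" "Q \<subset> C"
  shows "r P Q"
proof -
  have refl: "r X X" if "X \<noteq> {}" "X \<subset> C" for X
    using compl[OF that] sym trans by blast
  have singleton: "r {x} X" if "x \<in> X" "X \<subset> C" for x X
    using that refl nested[of "{x}" X] by (cases "X = {x}") auto
  obtain x y where xy: "x \<in> P" "y \<in> Q" using P(1) Q(1) by blast
  have "r {x} {y}"
  proof (cases "x = y")
    case False
    show ?thesis
    proof (cases "C = {x, y}")
      case True
      then show ?thesis using compl[of "{x}"] False by (auto simp: insert_Diff_if)
    next
      case False
      then have "{x, y} \<subset> C" using xy P Q by blast
      then show ?thesis using nested[of "{x}" "{x, y}"] nested[of "{y}" "{x, y}"] \<open>x \<noteq> y\<close> sym trans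
        by blast
    qed
  qed (use xy P in \<open>auto intro: refl\<close>)
  then show ?thesis using singleton[OF xy(1) P(2)] singleton[OF xy(2) Q(2)] sym trans by blast
qed

text \<open>Two graphs with the same bottom split of input a differ only in how that split cuts
  the fibre of a in two.\<close>
context
  fixes m n a :: nat and f :: "nat \<Rightarrow> nat"
  assumes a: "a < m"
    and f_less: "\<And>j. j < n \<Longrightarrow> f j < m"
    and f_onto: "\<And>i. i < m \<Longrightarrow> \<exists>j<n. f j = i"
    and IH: "\<And>K K'. wf_syn (Suc m) n K \<Longrightarrow> wf_syn (Suc m) n K' \<Longrightarrow>
      \<forall>j<n. out_root K j = out_root K' j \<Longrightarrow> cocom_cong (Suc m) n K K'"
begin

definition fibre :: "nat set" where
  "fibre = {j. j < n \<and> f j = a}"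

definition cut_root :: "nat set \<Rightarrow> nat \<Rightarrow> nat" where
  "cut_root P j = (if j \<in> P then a else if f j = a then m else f j)"

definition cut_graph :: "nat set \<Rightarrow> sgraph" where
  "cut_graph P = (SOME K. wf_syn (Suc m) n K \<and> (\<forall>j<n. out_root K j = cut_root P j))"

lemma cut_graph:
  assumes P: "P \<noteq> {}" "P \<subset> fibre"
  shows "wf_syn (Suc m) n (cut_graph P)" "\<forall>j<n. out_root (cut_graph P) j = cut_root P j"
proof -
  have "\<exists>K. wf_syn (Suc m) n K \<and> (\<forall>j<n. out_root K j = cut_root P j)"
  proof (rule exists_syn_with_out_root)
    show "cut_root P j < Suc m" if "j < n" for j
      using f_less[OF that] a by (simp add: cut_root_def)
    show "\<exists>j<n. cut_root P j = i" if i: "i < Suc m" for i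
    proof -
      consider "i = m" | "i = a" | "i < m" "i \<noteq> a" using i by linarith
      then show ?thesis
      proof cases
        case 1
        obtain j where "j \<in> fibre" "j \<notin> P" using P by blast
        then show ?thesis using 1 by (auto simp: cut_root_def fibre_def)
      next
        case 2
        obtain j where "j \<in> P" using P by blast
        then show ?thesis using 2 P by (auto simp: cut_root_def fibre_def)
      next
        case 3
        obtain j where j: "j < n" "f j = i" using f_onto 3 by blast
        then have "j \<notin> P" using P 3 by (auto simp: fibre_def)
        then show ?thesis using j 3 by (auto simp: cut_root_def)
      qed
    qed
  qed
  then have "wf_syn (Suc m) n (cut_graph P) \<and> (\<forall>j<n. out_root (cut_graph P) j = cut_root P j)"
    unfolding cut_graph_def by (rule someI_ex)
  then show "wf_syn (Suc m) n (cut_graph P)" "\<forall>j<n. out_root (cut_graph P) j = cut_root P j"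
    by auto
qed

lemma cocom_cong_cut_graph:
  assumes P: "P \<noteq> {}" "P \<subset> fibre"
    and K: "wf_syn (Suc m) n K" "\<forall>j<n. out_root K j = cut_root P j"
  shows "cocom_cong m n (syn_comp K (syn_split m a)) (syn_comp (cut_graph P) (syn_split m a))"
  using IH[OF K(1) cut_graph(1)[OF P]] K(2) cut_graph(2)[OF P] cocom_cong.comp_pre[OF _ wf_syn_split[OF a]]
  by simp

abbreviation cuts_cong :: "nat set \<Rightarrow> nat set \<Rightarrow> bool" where
  "cuts_cong P Q \<equiv> cocom_cong m n (syn_comp (cut_graph P) (syn_split m a))
     (syn_comp (cut_graph Q) (syn_split m a))"

text \<open>Cocommutativity exchanges the two parts of a cut.\<close>
lemma cuts_cong_compl:
  assumes P: "P \<noteq> {}" "P \<subset> fibre"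
  shows "cuts_cong P (fibre - P)"
proof -
  let ?K = "cut_graph P" and ?t = "syn_perm (transpose a m)"
  have t: "wf_syn (Suc m) (Suc m) ?t" using a by (intro wf_syn_perm_transpose) auto
  have K: "wf_syn (Suc m) n ?K" using cut_graph(1)[OF P] .
  have "cocom_cong m n (syn_comp ?K (syn_split m a)) (syn_comp ?K (syn_comp ?t (syn_split m a)))"
    by (rule cocom_cong.comp_post[OF cocom_cong_split_swap[OF a] K])
  moreover have "\<forall>j<n. out_root (syn_comp ?K ?t) j = cut_root (fibre - P) j"
    using out_root_comp[OF t K] cut_graph(2)[OF P] f_less a P(2)
    by (auto simp: cut_root_def fibre_def transpose_def)
  then have "cocom_cong m n (syn_comp (syn_comp ?K ?t) (syn_split m a))
      (syn_comp (cut_graph (fibre - P)) (syn_split m a))"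
    using P by (intro cocom_cong_cut_graph wf_syn_comp[OF t K]) auto
  ultimately show ?thesis by (auto simp: syn_comp_assoc intro: cocom_cong.trans)
qed

definition three_cut_root :: "nat set \<Rightarrow> nat set \<Rightarrow> nat \<Rightarrow> nat" where
  "three_cut_root P Q j = (if j \<in> P then a else if j \<in> Q then Suc m else if f j = a then m else f j)"

lemma exists_three_cut_graph:
  assumes P: "P \<noteq> {}" "P \<subset> Q" and Q: "Q \<subset> fibre"
  shows "\<exists>K. wf_syn (Suc (Suc m)) n K \<and> (\<forall>j<n. out_root K j = three_cut_root P Q j)"
proof (rule exists_syn_with_out_root)
  show "three_cut_root P Q j < Suc (Suc m)" if "j < n" for j
    using f_less[OF that] a by (simp add: three_cut_root_def)
  show "\<exists>j<n. three_cut_root P Q j = i" if i: "i < Suc (Suc m)" for i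
  proof -
    consider "i = Suc m" | "i = m" | "i = a" | "i < m" "i \<noteq> a" using i by linarith
    then show ?thesis
    proof cases
      case 1
      obtain j where "j \<in> Q" "j \<notin> P" using P by blast
      then show ?thesis using 1 Q by (auto simp: three_cut_root_def fibre_def)
    next
      case 2
      obtain j where "j \<in> fibre" "j \<notin> Q" using Q by blast
      then show ?thesis using 2 P by (auto simp: three_cut_root_def fibre_def)
    next
      case 3
      obtain j where "j \<in> P" using P by blast
      then show ?thesis using 3 P Q by (auto simp: three_cut_root_def fibre_def)
    next
      case 4
      obtain j where j: "j < n" "f j = i" using f_onto 4 by blast
      then have "j \<notin> Q" "j \<notin> P" using P Q 4 by (auto simp: fibre_def)
      then show ?thesis using j 4 by (auto simp: three_cut_root_def)
    qed
  qed
qed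

text \<open>Coassociativity moves from a cut P to a cut Q containing it: both arise from the
  three-part cut P, Q - P, fibre - Q by merging two of the parts.\<close>
lemma cuts_cong_nested:
  assumes P: "P \<noteq> {}" "P \<subset> Q" and Q: "Q \<subset> fibre"
  shows "cuts_cong P Q"
proof -
  obtain K where K: "wf_syn (Suc (Suc m)) n K" "\<And>j. j < n \<Longrightarrow> out_root K j = three_cut_root P Q j"
    using exists_three_cut_graph[OF P Q] by blast
  let ?s = "syn_perm (transpose m (Suc m))"
  have s: "wf_syn (Suc (Suc m)) (Suc (Suc m)) ?s" by (rule wf_syn_perm_transpose) auto
  have Ks: "wf_syn (Suc (Suc m)) n (syn_comp K ?s)" by (rule wf_syn_comp[OF s K(1)])
  define KP where "KP = syn_comp (syn_comp K ?s) (syn_split (Suc m) m)"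
  define KQ where "KQ = syn_comp K (syn_split (Suc m) a)"
  have "\<forall>j<n. out_root KP j = cut_root P j"
  proof (intro allI impI)
    fix j assume j: "j < n"
    have "out_root (syn_comp K ?s) j = transpose m (Suc m) (three_cut_root P Q j)"
      using out_root_comp[OF s K(1) j] K(2)[OF j] by simp
    then show "out_root KP j = cut_root P j"
      using out_root_comp_split[OF _ Ks j, of m] f_less[OF j] a P Q unfolding KP_def
      by (auto simp: three_cut_root_def cut_root_def transpose_def fibre_def)
  qed
  then have "cocom_cong m n (syn_comp KP (syn_split m a)) (syn_comp (cut_graph P) (syn_split m a))"
    using P Q unfolding KP_def by (intro cocom_cong_cut_graph wf_syn_comp[OF wf_syn_split Ks]) auto
  moreover have "\<forall>j<n. out_root KQ j = cut_root Q j"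
  proof (intro allI impI)
    fix j assume j: "j < n"
    show "out_root KQ j = cut_root Q j"
      using out_root_comp_split[OF less_SucI[OF a] K(1) j] K(2)[OF j] f_less[OF j] a P Q
      unfolding KQ_def by (auto simp: three_cut_root_def cut_root_def fibre_def)
  qed
  then have "cocom_cong m n (syn_comp KQ (syn_split m a)) (syn_comp (cut_graph Q) (syn_split m a))"
    using P Q a unfolding KQ_def by (intro cocom_cong_cut_graph wf_syn_comp[OF wf_syn_split K(1)]) auto
  moreover have "cocom_cong m n (syn_comp KQ (syn_split m a)) (syn_comp KP (syn_split m a))"
    using cocom_cong.comp_post[OF cocom_cong_split_split[OF a] K(1)]
    unfolding KP_def KQ_def by (simp add: syn_comp_assoc)
  ultimately show ?thesis by (meson cocom_cong.sym cocom_cong.trans)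
qed

lemma cocom_cong_same_split:
  assumes G: "wf_syn (Suc m) n G" and H: "wf_syn (Suc m) n H"
    and fG: "\<forall>j<n. out_root (syn_comp G (syn_split m a)) j = f j"
    and fH: "\<forall>j<n. out_root (syn_comp H (syn_split m a)) j = f j"
  shows "cocom_cong m n (syn_comp G (syn_split m a)) (syn_comp H (syn_split m a))"
proof -
  have cut: "cocom_cong m n (syn_comp K (syn_split m a))
      (syn_comp (cut_graph {j. j < n \<and> out_root K j = a}) (syn_split m a))"
    and proper: "{j. j < n \<and> out_root K j = a} \<noteq> {}" "{j. j < n \<and> out_root K j = a} \<subset> fibre"
    if K: "wf_syn (Suc m) n K" and fK: "\<forall>j<n. out_root (syn_comp K (syn_split m a)) j = f j" for K
  proof -
    let ?P = "{j. j < n \<and> out_root K j = a}"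
    have root: "out_root K j = cut_root ?P j" if "j < n" for j
      using fK out_root_comp_split[OF a K that] out_root_less[OF K that] that a
      by (auto simp: cut_root_def)
    obtain j where "j < n" "out_root K j = a" using out_root_surj[OF K, of a] a by auto
    then show P: "?P \<noteq> {}" by auto
    have "?P \<subseteq> fibre"
      using fK out_root_comp_split[OF a K] a by (auto simp: fibre_def)
    moreover obtain j' where "j' < n" "out_root K j' = m" using out_root_surj[OF K, of m] by auto
    then have "j' \<in> fibre - ?P"
      using fK out_root_comp_split[OF a K] a by (auto simp: fibre_def)
    ultimately show "?P \<subset> fibre" by blast
    then show "cocom_cong m n (syn_comp K (syn_split m a)) (syn_comp (cut_graph ?P) (syn_split m a))"
      using P root by (intro cocom_cong_cut_graph K) auto
  qed
  have "cuts_cong {j. j < n \<and> out_root G j = a} {j. j < n \<and> out_root H j = a}"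
    by (rule nonempty_proper_subsets_connected[where r = cuts_cong and C = fibre,
          OF cocom_cong.sym cocom_cong.trans cuts_cong_compl cuts_cong_nested
          proper[OF G fG] proper[OF H fH]])
  then show ?thesis using cut[OF G fG] cut[OF H fH] by (meson cocom_cong.sym cocom_cong.trans)
qed

end

definition merged_root :: "nat \<Rightarrow> sgraph \<Rightarrow> sgraph \<Rightarrow> nat \<Rightarrow> nat" where
  "merged_root m G H j =
     (if out_root G j = m then m else if out_root H j = m then Suc m else out_root G j)"

lemma exists_syn_merged_root:
  assumes G: "wf_syn (Suc m) n G" and H: "wf_syn (Suc m) n H"
    and ab: "a < m" "b < m" "a \<noteq> b"
    and eq: "\<And>j. j < n \<Longrightarrow>
      (if out_root G j = m then a else out_root G j) = (if out_root H j = m then b else out_root H j)"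
  shows "\<exists>K. wf_syn (Suc (Suc m)) n K \<and> (\<forall>j<n. out_root K j = merged_root m G H j)"
proof (rule exists_syn_with_out_root)
  show "merged_root m G H j < Suc (Suc m)" if "j < n" for j
    using out_root_less[OF G that] by (simp add: merged_root_def)
  show "\<exists>j<n. merged_root m G H j = i" if i: "i < Suc (Suc m)" for i
  proof -
    consider "i = m" | "i = Suc m" | "i < m" using i by linarith
    then show ?thesis
    proof cases
      case 1
      obtain j where "j < n" "out_root G j = m" using out_root_surj[OF G, of m] by auto
      then show ?thesis using 1 by (auto simp: merged_root_def)
    next
      case 2
      obtain j where j: "j < n" "out_root H j = m" using out_root_surj[OF H, of m] by auto
      then have "out_root G j \<noteq> m" using eq[OF j(1)] ab by auto
      then show ?thesis using 2 j by (intro exI[of _ j]) (simp add: merged_root_def)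
    next
      case 3
      obtain j where j: "j < n" "out_root G j = i" using out_root_surj[OF G, of i] 3 by auto
      show ?thesis
      proof (cases "out_root H j = m")
        case False
        then show ?thesis using j 3 by (auto simp: merged_root_def)
      next
        case True
        then have "i = b" using eq[OF j(1)] j 3 by simp
        obtain j' where j': "j' < n" "out_root H j' = b" using out_root_surj[OF H, of b] ab by auto
        then have "out_root G j' \<noteq> m" using eq[OF j'(1)] ab by auto
        moreover from this have "out_root G j' = b" using eq[OF j'(1)] j' ab by auto
        ultimately show ?thesis
          using j' \<open>i = b\<close> ab by (intro exI[of _ j']) (auto simp: merged_root_def)
      qed
    qed
  qed
qed

text \<open>Both composites arise from one graph K on Suc (Suc m) inputs, whose roots record the
  new inputs of both splits, by splitting a and b in either order; the two orders commute.\<close>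
lemma cocom_cong_different_splits:
  assumes IH: "\<And>K K'. wf_syn (Suc m) n K \<Longrightarrow> wf_syn (Suc m) n K' \<Longrightarrow>
      \<forall>j<n. out_root K j = out_root K' j \<Longrightarrow> cocom_cong (Suc m) n K K'"
    and G: "wf_syn (Suc m) n G" and H: "wf_syn (Suc m) n H"
    and ab: "a < m" "b < m" "a \<noteq> b"
    and eq: "\<forall>j<n. out_root (syn_comp G (syn_split m a)) j = out_root (syn_comp H (syn_split m b)) j"
  shows "cocom_cong m n (syn_comp G (syn_split m a)) (syn_comp H (syn_split m b))"
proof -
  have eq': "(if out_root G j = m then a else out_root G j) =
      (if out_root H j = m then b else out_root H j)" if "j < n" for j
    using eq that out_root_comp_split[OF ab(1) G that] out_root_comp_split[OF ab(2) H that] by simp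
  obtain K where K: "wf_syn (Suc (Suc m)) n K" "\<And>j. j < n \<Longrightarrow> out_root K j = merged_root m G H j"
    using exists_syn_merged_root[OF G H ab eq'] by blast
  let ?s = "syn_perm (transpose m (Suc m))"
  have s: "wf_syn (Suc (Suc m)) (Suc (Suc m)) ?s" by (rule wf_syn_perm_transpose) auto
  have Ks: "wf_syn (Suc (Suc m)) n (syn_comp K ?s)" by (rule wf_syn_comp[OF s K(1)])
  have a1: "a < Suc m" and b1: "b < Suc m" using ab by auto
  have "cocom_cong (Suc m) n G (syn_comp K (syn_split (Suc m) b))"
  proof (rule IH[OF G wf_syn_comp[OF wf_syn_split[OF b1] K(1)]], intro allI impI)
    fix j assume j: "j < n"
    show "out_root G j = out_root (syn_comp K (syn_split (Suc m) b)) j"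
      using out_root_comp_split[OF b1 K(1) j] K(2)[OF j] eq'[OF j] out_root_less[OF G j] ab
      by (auto simp: merged_root_def)
  qed
  then have G_K: "cocom_cong m n (syn_comp G (syn_split m a))
      (syn_comp K (syn_comp (syn_split (Suc m) b) (syn_split m a)))"
    using cocom_cong.comp_pre[OF _ wf_syn_split[OF ab(1)]] by (simp add: syn_comp_assoc)
  have "cocom_cong (Suc m) n H (syn_comp (syn_comp K ?s) (syn_split (Suc m) a))"
  proof (rule IH[OF H wf_syn_comp[OF wf_syn_split[OF a1] Ks]], intro allI impI)
    fix j assume j: "j < n"
    have "out_root (syn_comp K ?s) j = transpose m (Suc m) (merged_root m G H j)"
      using out_root_comp[OF s K(1) j] K(2)[OF j] by simp
    then show "out_root H j = out_root (syn_comp (syn_comp K ?s) (syn_split (Suc m) a)) j"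
      using out_root_comp_split[OF a1 Ks j] eq'[OF j] out_root_less[OF G j] out_root_less[OF H j] ab
      by (auto simp: merged_root_def transpose_def)
  qed
  then have H_K: "cocom_cong m n (syn_comp H (syn_split m b))
      (syn_comp K (syn_comp ?s (syn_comp (syn_split (Suc m) a) (syn_split m b))))"
    using cocom_cong.comp_pre[OF _ wf_syn_split[OF ab(2)]] by (simp add: syn_comp_assoc)
  have "cocom_cong m (Suc (Suc m)) (syn_comp (syn_split (Suc m) b) (syn_split m a))
      (syn_comp ?s (syn_comp (syn_split (Suc m) a) (syn_split m b)))"
    by (rule cocom_cong.iso[OF wf_syn_comp[OF wf_syn_split[OF ab(1)] wf_syn_split[OF b1]]
          wf_syn_comp[OF wf_syn_comp[OF wf_syn_split[OF ab(2)] wf_syn_split[OF a1]] s]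
          syn_iso_splits_commute[OF ab]])
  from cocom_cong.comp_post[OF this K(1)] G_K H_K show ?thesis
    by (meson cocom_cong.sym cocom_cong.trans)
qed

lemma syn_iso_if_no_vertices:
  assumes G: "wf_syn m n G" "fst G = 0" and H: "wf_syn m n H" "fst H = 0"
    and eq: "\<forall>j<n. out_root G j = out_root H j"
  shows "syn_iso n G H"
proof (rule syn_isoI_eq)
  have input: "snd K (TOut j) = SIn (out_root K j)" if "wf_syn m n K" "fst K = 0" "j < n" for K j
    using wf_syn_into[OF that(1), of "TOut j"] that
    by (cases "snd K (TOut j)") (auto simp: out_root_eqI)
  show "snd G t = snd H t" if "t \<in> targets n (fst G)" for t
    using that G input[OF G] input[OF H] eq by (cases t) auto
qed (simp add: G H)

theorem cocom_cong_if_same_out_root: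
  assumes "wf_syn m n G" "wf_syn m n H" "\<forall>j<n. out_root G j = out_root H j"
  shows "cocom_cong m n G H"
  using assms
proof (induction "fst G" arbitrary: m G H)
  case 0
  then have "fst H = 0" using wf_syn_outputs[OF "0.prems"(1)] wf_syn_outputs[OF "0.prems"(2)] by simp
  then show ?case using 0 by (intro cocom_cong.iso syn_iso_if_no_vertices) simp_all
next
  case (Suc v)
  note G = Suc.prems(1) and H = Suc.prems(2)
  have "fst H = Suc v" using wf_syn_outputs[OF G] wf_syn_outputs[OF H] Suc.hyps(2) by simp
  obtain a G' where a: "a < m" and G': "wf_syn (Suc m) n G'"
    and iso_G: "syn_iso n G (syn_comp G' (syn_split m a))"
    using syn_peel[OF G Suc.hyps(2)[symmetric]] by blast
  obtain b H' where b: "b < m" and H': "wf_syn (Suc m) n H'"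
    and iso_H: "syn_iso n H (syn_comp H' (syn_split m b))"
    using syn_peel[OF H \<open>fst H = Suc v\<close>] by blast
  have IH: "cocom_cong (Suc m) n K K'"
    if "wf_syn (Suc m) n K" "wf_syn (Suc m) n K'" "\<forall>j<n. out_root K j = out_root K' j" for K K'
  proof -
    have "v = fst K" using wf_syn_outputs[OF G] wf_syn_outputs[OF that(1)] Suc.hyps(2) by simp
    then show ?thesis by (rule Suc.hyps(1)[OF _ that])
  qed
  have roots: "\<forall>j<n. out_root (syn_comp G' (syn_split m a)) j = out_root G j"
    "\<forall>j<n. out_root (syn_comp H' (syn_split m b)) j = out_root G j"
    using out_root_iso[OF G iso_G] out_root_iso[OF H iso_H] Suc.prems(3) by simp_all
  have "cocom_cong m n (syn_comp G' (syn_split m a)) (syn_comp H' (syn_split m b))"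
  proof (cases "a = b")
    case True
    show ?thesis
      using cocom_cong_same_split[OF a out_root_less[OF G] out_root_surj[OF G] IH G' H' roots(1)]
        roots(2) True by blast
  next
    case False
    then show ?thesis using cocom_cong_different_splits[OF IH G' H' a b] roots by presburger
  qed
  moreover have "cocom_cong m n G (syn_comp G' (syn_split m a))"
    by (rule cocom_cong.iso[OF G wf_syn_comp[OF wf_syn_split[OF a] G'] iso_G])
  moreover have "cocom_cong m n H (syn_comp H' (syn_split m b))"
    by (rule cocom_cong.iso[OF H wf_syn_comp[OF wf_syn_split[OF b] H'] iso_H])
  ultimately show ?case by (meson cocom_cong.sym cocom_cong.trans)
qed

section \<open>The image of the ancestry functor\<close>

lemma ancestry_in_fincorel_circ:
  assumes G: "wf_syn m n G"
  shows "ancestry m n G \<in> fincorel_circ m n"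
proof -
  have root_less: "bnd_root G x < m" if "x \<in> bnd m n" for x
    using that out_root_less[OF G] by (auto simp: bnd_def)
  have "equiv (bnd m n) (ancestry m n G)"
    unfolding ancestry_same_root[OF G] equiv_def refl_on_def sym_def trans_def by auto
  moreover have "\<exists>!i. i < m \<and> (x, Inl i) \<in> ancestry m n G" if x: "x \<in> bnd m n" for x
    using root_less[OF x] x by (auto simp: ancestry_same_root[OF G] bnd_def)
  moreover have "\<exists>j<n. (x, Inr j) \<in> ancestry m n G" if x: "x \<in> bnd m n" for x
  proof -
    obtain j where "j < n" "out_root G j = bnd_root G x" using out_root_surj[OF G root_less[OF x]] by blast
    then show ?thesis using x by (auto simp: ancestry_same_root[OF G] bnd_def)
  qed
  ultimately show ?thesis by (simp add: fincorel_circ_def fincorel_def)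
qed

definition corel_root :: "(nat + nat) rel \<Rightarrow> nat + nat \<Rightarrow> nat" where
  "corel_root R x = (THE i. (x, Inl i) \<in> R)"

lemma fincorel_circ_root:
  assumes R: "R \<in> fincorel_circ m n" and x: "x \<in> bnd m n"
  shows "corel_root R x < m" "(x, Inl (corel_root R x)) \<in> R"
    and "(x, Inl i) \<in> R \<Longrightarrow> corel_root R x = i"
proof -
  have "R \<subseteq> bnd m n \<times> bnd m n"
    using R by (simp add: fincorel_circ_def fincorel_def equiv_def refl_on_def)
  then have "(x, Inl i) \<in> R \<Longrightarrow> i < m" for i by (auto simp: bnd_def)
  then have "\<exists>!i. (x, Inl i) \<in> R" using R x by (auto simp: fincorel_circ_def)
  then show "(x, Inl (corel_root R x)) \<in> R" "(x, Inl i) \<in> R \<Longrightarrow> corel_root R x = i"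
    unfolding corel_root_def by (auto intro: theI')
  then show "corel_root R x < m" using \<open>\<And>i. (x, Inl i) \<in> R \<Longrightarrow> i < m\<close> by blast
qed

lemma fincorel_circ_same_root:
  assumes R: "R \<in> fincorel_circ m n"
  shows "R = {(x, y). x \<in> bnd m n \<and> y \<in> bnd m n \<and> corel_root R x = corel_root R y}"
proof -
  have eqv: "equiv (bnd m n) R" using R by (simp add: fincorel_circ_def fincorel_def)
  have "(x, y) \<in> R \<longleftrightarrow> x \<in> bnd m n \<and> y \<in> bnd m n \<and> corel_root R x = corel_root R y" for x y
  proof
    assume xy: "(x, y) \<in> R"
    then have b: "x \<in> bnd m n" "y \<in> bnd m n" using eqv by (auto simp: equiv_def refl_on_def)
    then have "(x, Inl (corel_root R y)) \<in> R"
      using xy fincorel_circ_root(2)[OF R b(2)] eqv by (meson equivE transD)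
    then show "x \<in> bnd m n \<and> y \<in> bnd m n \<and> corel_root R x = corel_root R y"
      using fincorel_circ_root(3)[OF R b(1)] b by blast
  next
    assume h: "x \<in> bnd m n \<and> y \<in> bnd m n \<and> corel_root R x = corel_root R y"
    then show "(x, y) \<in> R"
      using fincorel_circ_root(2)[OF R] eqv by (metis equivE symD transD)
  qed
  then show ?thesis by auto
qed

lemma fincorel_circ_ancestry:
  assumes R: "R \<in> fincorel_circ m n"
  obtains G where "wf_syn m n G" "ancestry m n G = R"
proof -
  let ?f = "\<lambda>j. corel_root R (Inr j)"
  have "\<exists>G. wf_syn m n G \<and> (\<forall>j<n. out_root G j = ?f j)"
  proof (rule exists_syn_with_out_root)
    show "?f j < m" if "j < n" for j using fincorel_circ_root(1)[OF R] that by (simp add: bnd_def)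
    show "\<exists>j<n. ?f j = i" if i: "i < m" for i
    proof -
      have "Inl i \<in> bnd m n" using i by (simp add: bnd_def)
      then obtain j where j: "j < n" "(Inl i, Inr j) \<in> R"
        using R by (auto simp: fincorel_circ_def)
      then have "(Inr j, Inl i) \<in> R"
        using R by (auto simp: fincorel_circ_def fincorel_def equiv_def dest: symD)
      then show ?thesis using fincorel_circ_root(3)[OF R] j by (auto simp: bnd_def)
    qed
  qed
  then obtain G where G: "wf_syn m n G" "\<forall>j<n. out_root G j = ?f j" by blast
  have "bnd_root G x = corel_root R x" if x: "x \<in> bnd m n" for x
  proof (cases x)
    case (Inl i)
    have "(x, x) \<in> R" using R x by (auto simp: fincorel_circ_def fincorel_def equiv_def refl_on_def)
    then show ?thesis using fincorel_circ_root(3)[OF R x] Inl by simp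
  next
    case (Inr j)
    then show ?thesis using G(2) x by (auto simp: bnd_def)
  qed
  then have "ancestry m n G = R"
    by (subst fincorel_circ_same_root[OF R]) (auto simp: ancestry_same_root[OF G(1)])
  then show thesis using that G(1) by blast
qed

theorem theorem2p16:
  shows "(\<forall>m n G. wf_syn m n G \<longrightarrow> ancestry m n G \<in> fincorel_circ m n) \<and>
         (\<forall>m n R. R \<in> fincorel_circ m n \<longrightarrow> (\<exists>G. wf_syn m n G \<and> ancestry m n G = R)) \<and>
         (\<forall>m n G H. wf_syn m n G \<and> wf_syn m n H \<longrightarrow>
            (ancestry m n G = ancestry m n H \<longleftrightarrow> cocom_cong m n G H))"
proof (intro conjI allI impI)
  show "ancestry m n G \<in> fincorel_circ m n" if "wf_syn m n G" for m n G
    using ancestry_in_fincorel_circ[OF that] .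
  show "\<exists>G. wf_syn m n G \<and> ancestry m n G = R" if "R \<in> fincorel_circ m n" for m n R
    using fincorel_circ_ancestry[OF that] by blast
  show "ancestry m n G = ancestry m n H \<longleftrightarrow> cocom_cong m n G H"
    if "wf_syn m n G \<and> wf_syn m n H" for m n G H
    using that ancestry_eq_iff_out_root_eq[of m n G H] cocom_cong_if_same_out_root[of m n G H]
      out_root_cocom_cong[of m n G H] by blast
qed

end
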